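(* Let $k$ be a field, $\Gamma=(V,E)$ a finite connected quiver and $I\subseteq R^2$ a two-sided ideal of $k\Gamma$ such that $k\Gamma/I$ is acyclic. Then $\dim_k HH^1(k\Gamma/I)=\dim_k\mathfrak{F}_2(I)+1-|V|$.
   Context: For a path $p$, $t(p),h(p)$ are its start and end vertex; paths multiply by left-to-right concatenation (product $0$ if they do not concatenate). $R$ is the ideal generated by $E$, $\overline{x}=x+I$. $HH^1(k\Gamma/I)$ is the space of derivations of $k\Gamma/I$ modulo inner derivations. A differential operator from $k\Gamma$ to $k\Gamma/I$ is a $k$-linear map with $D(xy)=D(x)\overline{y}+\overline{x}D(y)$. $\mathscr{Q}$ is a fixed $k$-basis of $k\Gamma/I$ consisting of residue classes of paths and containing the classes of all vertices and arrows; for $\overline{s}\in\mathscr{Q}$, $t(\overline{s}),h(\overline{s})$ are the start/end vertex of any representing path (well defined). $k\Gamma/I$ is acyclic if every $\overline{q}\in\mathscr{Q}$ with $t(\overline{q})=h(\overline{q})$ is the class of a vertex. For $r\in E$ and $\overline{s}\in\mathscr{Q}$ with $t(r)=t(\overline{s})$, $h(r)=h(\overline{s})$, $D_{r,\overline{s}}$ is the unique differential operator $k\Gamma\to k\Gamma/I$ with $D_{r,\overline{s}}(r)=\overline{s}$ and vanishing on all other arrows and vertices; $\mathfrak{D}_2$ is their $k$-span and $\mathfrak{F}_2(I)=\{D\in\mathfrak{D}_2\mid D(I)=0\}$. *)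

theory Defs
  imports Complex_Main "HOL-Library.Function_Algebras"
begin

text \<open>A path is a pair (v, es): its start vertex v and its list of arrows es
  (es = [] gives the trivial path at v). Paths are composed left to right.\<close>

type_synonym ('v,'e) qpath = "'v \<times> 'e list"

definition finite_connected_quiver :: "'v set \<Rightarrow> 'e set \<Rightarrow> ('e \<Rightarrow> 'v) \<Rightarrow> ('e \<Rightarrow> 'v) \<Rightarrow> bool" where
  "finite_connected_quiver V E s t \<longleftrightarrow>
     finite V \<and> finite E \<and> V \<noteq> {} \<and> s ` E \<subseteq> V \<and> t ` E \<subseteq> V \<and>
     (\<forall>u\<in>V. \<forall>w\<in>V. (u, w) \<in> ({(s e, t e) | e. e \<in> E} \<union> {(t e, s e) | e. e \<in> E})\<^sup>*)"

definition is_path :: "'v set \<Rightarrow> 'e set \<Rightarrow> ('e \<Rightarrow> 'v) \<Rightarrow> ('e \<Rightarrow> 'v) \<Rightarrow> ('v,'e) qpath \<Rightarrow> bool" where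
  "is_path V E s t p \<longleftrightarrow> fst p \<in> V \<and> set (snd p) \<subseteq> E \<and>
     (snd p \<noteq> [] \<longrightarrow> s (hd (snd p)) = fst p) \<and>
     (\<forall>i. Suc i < length (snd p) \<longrightarrow> t (snd p ! i) = s (snd p ! Suc i))"

definition pstart :: "('v,'e) qpath \<Rightarrow> 'v" where
  "pstart p = fst p"

definition pend :: "('e \<Rightarrow> 'v) \<Rightarrow> ('v,'e) qpath \<Rightarrow> 'v" where
  "pend t p = (if snd p = [] then fst p else t (last (snd p)))"

definition path_alg :: "'v set \<Rightarrow> 'e set \<Rightarrow> ('e \<Rightarrow> 'v) \<Rightarrow> ('e \<Rightarrow> 'v) \<Rightarrow> (('v,'e) qpath \<Rightarrow> 'k::field) set" where
  "path_alg V E s t = {f. finite {p. f p \<noteq> 0} \<and> (\<forall>p. f p \<noteq> 0 \<longrightarrow> is_path V E s t p)}"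

definition pvec :: "('v,'e) qpath \<Rightarrow> (('v,'e) qpath \<Rightarrow> 'k::field)" where
  "pvec p = (\<lambda>q. if q = p then 1 else 0)"

text \<open>Multiplication of k\<Gamma>, bilinear extension of left-to-right concatenation
  (product of non-concatenable paths is 0): the coefficient of the path (v, es) in f*g
  sums over all ways of splitting (v, es) as a concatenation of two paths.\<close>
definition pmult :: "('e \<Rightarrow> 'v) \<Rightarrow> (('v,'e) qpath \<Rightarrow> 'k::field) \<Rightarrow> (('v,'e) qpath \<Rightarrow> 'k) \<Rightarrow> (('v,'e) qpath \<Rightarrow> 'k)" where
  "pmult t f g = (\<lambda>(v, es). \<Sum>i\<le>length es. f (v, take i es) * g (pend t (v, take i es), drop i es))"

definition is_ideal :: "'v set \<Rightarrow> 'e set \<Rightarrow> ('e \<Rightarrow> 'v) \<Rightarrow> ('e \<Rightarrow> 'v) \<Rightarrow> (('v,'e) qpath \<Rightarrow> 'k::field) set \<Rightarrow> bool" where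
  "is_ideal V E s t J \<longleftrightarrow> J \<subseteq> path_alg V E s t \<and> 0 \<in> J \<and>
     (\<forall>x\<in>J. \<forall>y\<in>J. x + y \<in> J) \<and> (\<forall>c. \<forall>x\<in>J. (\<lambda>p. c * x p) \<in> J) \<and>
     (\<forall>x\<in>path_alg V E s t. \<forall>y\<in>J. pmult t x y \<in> J \<and> pmult t y x \<in> J)"

definition gen_ideal :: "'v set \<Rightarrow> 'e set \<Rightarrow> ('e \<Rightarrow> 'v) \<Rightarrow> ('e \<Rightarrow> 'v) \<Rightarrow> (('v,'e) qpath \<Rightarrow> 'k::field) set \<Rightarrow> (('v,'e) qpath \<Rightarrow> 'k) set" where
  "gen_ideal V E s t S = \<Inter>{J. is_ideal V E s t J \<and> S \<subseteq> J}"

definition arrow_ideal :: "'v set \<Rightarrow> 'e set \<Rightarrow> ('e \<Rightarrow> 'v) \<Rightarrow> ('e \<Rightarrow> 'v) \<Rightarrow> (('v,'e) qpath \<Rightarrow> 'k::field) set" where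
  "arrow_ideal V E s t = gen_ideal V E s t {pvec (s e, [e]) | e. e \<in> E}"

definition arrow_ideal_sq :: "'v set \<Rightarrow> 'e set \<Rightarrow> ('e \<Rightarrow> 'v) \<Rightarrow> ('e \<Rightarrow> 'v) \<Rightarrow> (('v,'e) qpath \<Rightarrow> 'k::field) set" where
  "arrow_ideal_sq V E s t = gen_ideal V E s t
     {pmult t a b | a b. a \<in> arrow_ideal V E s t \<and> b \<in> arrow_ideal V E s t}"

text \<open>The quotient k\<Gamma>/I is presented (up to isomorphism) as a type 'a with addition,
  scalar multiplication sc and multiplication mul, together with the residue map
  \<pi> : k\<Gamma> \<rightarrow> 'a, which is a surjective algebra homomorphism with kernel I.\<close>
definition quotient_presentation ::
  "'v set \<Rightarrow> 'e set \<Rightarrow> ('e \<Rightarrow> 'v) \<Rightarrow> ('e \<Rightarrow> 'v) \<Rightarrow> (('v,'e) qpath \<Rightarrow> 'k::field) set \<Rightarrow>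
   ((('v,'e) qpath \<Rightarrow> 'k) \<Rightarrow> 'a::ab_group_add) \<Rightarrow> ('k \<Rightarrow> 'a \<Rightarrow> 'a) \<Rightarrow> ('a \<Rightarrow> 'a \<Rightarrow> 'a) \<Rightarrow> bool" where
  "quotient_presentation V E s t I \<pi> sc mul \<longleftrightarrow>
     (\<forall>x\<in>path_alg V E s t. \<forall>y\<in>path_alg V E s t.
        \<pi> (x + y) = \<pi> x + \<pi> y \<and> \<pi> (pmult t x y) = mul (\<pi> x) (\<pi> y)) \<and>
     (\<forall>c. \<forall>x\<in>path_alg V E s t. \<pi> (\<lambda>p. c * x p) = sc c (\<pi> x)) \<and>
     \<pi> ` path_alg V E s t = UNIV \<and>
     (\<forall>x\<in>path_alg V E s t. \<pi> x = 0 \<longleftrightarrow> x \<in> I)"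

definition fscale :: "('k \<Rightarrow> 'a \<Rightarrow> 'a) \<Rightarrow> 'k \<Rightarrow> ('b \<Rightarrow> 'a) \<Rightarrow> ('b \<Rightarrow> 'a)" where
  "fscale sc c f = (\<lambda>x. sc c (f x))"

definition quot_dim :: "('k::field \<Rightarrow> 'b::ab_group_add \<Rightarrow> 'b) \<Rightarrow> 'b set \<Rightarrow> 'b set \<Rightarrow> nat" where
  "quot_dim scale U W = vector_space.dim scale
     (SOME C. module.subspace scale C \<and> C \<subseteq> U \<and> C \<inter> W = {0} \<and>
              (\<forall>u\<in>U. \<exists>c\<in>C. \<exists>w\<in>W. u = c + w))"

definition is_derivation :: "('k \<Rightarrow> 'a \<Rightarrow> 'a) \<Rightarrow> ('a \<Rightarrow> 'a \<Rightarrow> 'a::ab_group_add) \<Rightarrow> ('a \<Rightarrow> 'a) \<Rightarrow> bool" where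
  "is_derivation sc mul d \<longleftrightarrow>
     (\<forall>a b. d (a + b) = d a + d b) \<and> (\<forall>c a. d (sc c a) = sc c (d a)) \<and>
     (\<forall>a b. d (mul a b) = mul (d a) b + mul a (d b))"

definition derivations :: "('k \<Rightarrow> 'a \<Rightarrow> 'a) \<Rightarrow> ('a \<Rightarrow> 'a \<Rightarrow> 'a::ab_group_add) \<Rightarrow> ('a \<Rightarrow> 'a) set" where
  "derivations sc mul = {d. is_derivation sc mul d}"

definition inner_derivations :: "('a \<Rightarrow> 'a \<Rightarrow> 'a::ab_group_add) \<Rightarrow> ('a \<Rightarrow> 'a) set" where
  "inner_derivations mul = {d. \<exists>a. d = (\<lambda>x. mul a x - mul x a)}"

text \<open>dim_k HH^1(A) = dim_k (Der(A) / Inn(A)).\<close>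
definition hh1_dim :: "('k::field \<Rightarrow> 'a \<Rightarrow> 'a) \<Rightarrow> ('a \<Rightarrow> 'a \<Rightarrow> 'a::ab_group_add) \<Rightarrow> nat" where
  "hh1_dim sc mul = quot_dim (fscale sc) (derivations sc mul) (inner_derivations mul)"

definition path_basis :: "'v set \<Rightarrow> 'e set \<Rightarrow> ('e \<Rightarrow> 'v) \<Rightarrow> ('e \<Rightarrow> 'v) \<Rightarrow>
   ((('v,'e) qpath \<Rightarrow> 'k::field) \<Rightarrow> 'a::ab_group_add) \<Rightarrow> ('k \<Rightarrow> 'a \<Rightarrow> 'a) \<Rightarrow> 'a set \<Rightarrow> bool" where
  "path_basis V E s t \<pi> sc Q \<longleftrightarrow>
     \<not> module.dependent sc Q \<and> module.span sc Q = UNIV \<and>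
     (\<forall>q\<in>Q. \<exists>p. is_path V E s t p \<and> q = \<pi> (pvec p)) \<and>
     (\<forall>v\<in>V. \<pi> (pvec (v, [])) \<in> Q) \<and>
     (\<forall>e\<in>E. \<pi> (pvec (s e, [e])) \<in> Q)"

definition qstart :: "'v set \<Rightarrow> 'e set \<Rightarrow> ('e \<Rightarrow> 'v) \<Rightarrow> ('e \<Rightarrow> 'v) \<Rightarrow>
   ((('v,'e) qpath \<Rightarrow> 'k::field) \<Rightarrow> 'a) \<Rightarrow> 'a \<Rightarrow> 'v" where
  "qstart V E s t \<pi> q = pstart (SOME p. is_path V E s t p \<and> \<pi> (pvec p) = q)"

definition qend :: "'v set \<Rightarrow> 'e set \<Rightarrow> ('e \<Rightarrow> 'v) \<Rightarrow> ('e \<Rightarrow> 'v) \<Rightarrow>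
   ((('v,'e) qpath \<Rightarrow> 'k::field) \<Rightarrow> 'a) \<Rightarrow> 'a \<Rightarrow> 'v" where
  "qend V E s t \<pi> q = pend t (SOME p. is_path V E s t p \<and> \<pi> (pvec p) = q)"

definition acyclic_wrt :: "'v set \<Rightarrow> 'e set \<Rightarrow> ('e \<Rightarrow> 'v) \<Rightarrow> ('e \<Rightarrow> 'v) \<Rightarrow>
   ((('v,'e) qpath \<Rightarrow> 'k::field) \<Rightarrow> 'a) \<Rightarrow> 'a set \<Rightarrow> bool" where
  "acyclic_wrt V E s t \<pi> Q \<longleftrightarrow>
     (\<forall>q\<in>Q. qstart V E s t \<pi> q = qend V E s t \<pi> q \<longrightarrow> (\<exists>v\<in>V. q = \<pi> (pvec (v, []))))"

text \<open>Differential operators k\<Gamma> \<rightarrow> k\<Gamma>/I (k-linear, twisted Leibniz rule); as maps on the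
  carrier k\<Gamma> they are taken extensional (0 outside k\<Gamma>).\<close>
definition is_diffop :: "'v set \<Rightarrow> 'e set \<Rightarrow> ('e \<Rightarrow> 'v) \<Rightarrow> ('e \<Rightarrow> 'v) \<Rightarrow>
   ((('v,'e) qpath \<Rightarrow> 'k::field) \<Rightarrow> 'a::ab_group_add) \<Rightarrow> ('k \<Rightarrow> 'a \<Rightarrow> 'a) \<Rightarrow> ('a \<Rightarrow> 'a \<Rightarrow> 'a) \<Rightarrow>
   ((('v,'e) qpath \<Rightarrow> 'k) \<Rightarrow> 'a) \<Rightarrow> bool" where
  "is_diffop V E s t \<pi> sc mul D \<longleftrightarrow>
     (\<forall>x\<in>path_alg V E s t. \<forall>y\<in>path_alg V E s t.
        D (x + y) = D x + D y \<and> D (pmult t x y) = mul (D x) (\<pi> y) + mul (\<pi> x) (D y)) \<and>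
     (\<forall>c. \<forall>x\<in>path_alg V E s t. D (\<lambda>p. c * x p) = sc c (D x)) \<and>
     (\<forall>x. x \<notin> path_alg V E s t \<longrightarrow> D x = 0)"

definition Drs :: "'v set \<Rightarrow> 'e set \<Rightarrow> ('e \<Rightarrow> 'v) \<Rightarrow> ('e \<Rightarrow> 'v) \<Rightarrow>
   ((('v,'e) qpath \<Rightarrow> 'k::field) \<Rightarrow> 'a::ab_group_add) \<Rightarrow> ('k \<Rightarrow> 'a \<Rightarrow> 'a) \<Rightarrow> ('a \<Rightarrow> 'a \<Rightarrow> 'a) \<Rightarrow>
   'e \<Rightarrow> 'a \<Rightarrow> ((('v,'e) qpath \<Rightarrow> 'k) \<Rightarrow> 'a)" where
  "Drs V E s t \<pi> sc mul r q = (THE D. is_diffop V E s t \<pi> sc mul D \<and>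
      D (pvec (s r, [r])) = q \<and>
      (\<forall>e\<in>E. e \<noteq> r \<longrightarrow> D (pvec (s e, [e])) = 0) \<and>
      (\<forall>v\<in>V. D (pvec (v, [])) = 0))"

definition frakD2 :: "'v set \<Rightarrow> 'e set \<Rightarrow> ('e \<Rightarrow> 'v) \<Rightarrow> ('e \<Rightarrow> 'v) \<Rightarrow>
   ((('v,'e) qpath \<Rightarrow> 'k::field) \<Rightarrow> 'a::ab_group_add) \<Rightarrow> ('k \<Rightarrow> 'a \<Rightarrow> 'a) \<Rightarrow> ('a \<Rightarrow> 'a \<Rightarrow> 'a) \<Rightarrow>
   'a set \<Rightarrow> ((('v,'e) qpath \<Rightarrow> 'k) \<Rightarrow> 'a) set" where
  "frakD2 V E s t \<pi> sc mul Q = module.span (fscale sc)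
     {Drs V E s t \<pi> sc mul r q | r q. r \<in> E \<and> q \<in> Q \<and>
        s r = qstart V E s t \<pi> q \<and> t r = qend V E s t \<pi> q}"

definition frakF2 :: "'v set \<Rightarrow> 'e set \<Rightarrow> ('e \<Rightarrow> 'v) \<Rightarrow> ('e \<Rightarrow> 'v) \<Rightarrow>
   (('v,'e) qpath \<Rightarrow> 'k::field) set \<Rightarrow>
   ((('v,'e) qpath \<Rightarrow> 'k) \<Rightarrow> 'a::ab_group_add) \<Rightarrow> ('k \<Rightarrow> 'a \<Rightarrow> 'a) \<Rightarrow> ('a \<Rightarrow> 'a \<Rightarrow> 'a) \<Rightarrow>
   'a set \<Rightarrow> ((('v,'e) qpath \<Rightarrow> 'k) \<Rightarrow> 'a) set" where
  "frakF2 V E s t I \<pi> sc mul Q = {D \<in> frakD2 V E s t \<pi> sc mul Q. \<forall>x\<in>I. D x = 0}"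

end

theory Submission
  imports Defs
begin

text \<open>Every derivation of \<open>A = k\<Gamma>/I\<close> differs by an inner derivation from one that kills all
  vertices \<open>e\<^sub>v\<close>. Composing with the residue map identifies these normalized derivations with
  the differential operators \<open>k\<Gamma> \<rightarrow> A\<close> that vanish on the vertices and on \<open>I\<close>. Such an
  operator sends an arrow \<open>r\<close> from \<open>u\<close> to \<open>w\<close> into \<open>e\<^sub>u A e\<^sub>w\<close>, which is spanned by the
  basis paths parallel to \<open>r\<close>; so these operators form exactly \<open>F\<^sub>2(I)\<close>. The normalized inner
  derivations are the \<open>ad b\<close> with \<open>b\<close> a combination of vertices, because acyclicity gives
  \<open>e\<^sub>v A e\<^sub>v = k e\<^sub>v\<close>; as the quiver is connected, \<open>ad b = 0\<close> forces \<open>b\<close> to be a multiple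
  of \<open>1 = \<Sum>\<^sub>v e\<^sub>v\<close>, so they form a space of dimension \<open>|V| - 1\<close>. Acyclicity together with
  \<open>I \<subseteq> R\<^sup>2\<close> also kills every path of length \<open>\<ge> |V|\<close>, so all spaces involved are
  finite-dimensional.\<close>

section \<open>Paths and the path algebra\<close>

definition path_conc :: "('v,'e) qpath \<Rightarrow> ('v,'e) qpath \<Rightarrow> ('v,'e) qpath" where
  "path_conc p q = (fst p, snd p @ snd q)"

definition kscale :: "'k::field \<Rightarrow> ('b \<Rightarrow> 'k) \<Rightarrow> ('b \<Rightarrow> 'k)" where
  "kscale c x = (\<lambda>p. c * x p)"

lemma pmult_apply: "pmult t f g (v, es) =
   (\<Sum>i\<le>length es. f (v, take i es) * g (pend t (v, take i es), drop i es))"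
  by (simp add: pmult_def)

lemma pmult_add_left: "pmult t (x + y) z = pmult t x z + pmult t y z"
  by (rule ext) (auto simp: pmult_def distrib_right sum.distrib split: prod.splits)

lemma pmult_add_right: "pmult t x (y + z) = pmult t x y + pmult t x z"
  by (rule ext) (auto simp: pmult_def distrib_left sum.distrib split: prod.splits)

lemma pmult_kscale_left: "pmult t (kscale c x) z = kscale c (pmult t x z)"
  by (rule ext) (auto simp: pmult_def kscale_def sum_distrib_left mult.assoc split: prod.splits)

lemma pmult_kscale_right: "pmult t x (kscale c z) = kscale c (pmult t x z)"
  by (rule ext)
    (auto simp: pmult_def kscale_def sum_distrib_left mult.assoc mult.left_commute split: prod.splits)

lemma pend_take_drop:
  assumes "j + k \<le> length es"
  shows "pend t (pend t (v, take j es), take k (drop j es)) = pend t (v, take (j + k) es)"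
proof (cases "k = 0")
  case False
  then have "take k (drop j es) \<noteq> []" using assms by auto
  moreover have "take (j + k) es = take j es @ take k (drop j es)" by (simp add: take_add)
  ultimately show ?thesis by (simp add: pend_def)
qed (simp add: pend_def)

lemma pend_take_Suc: "i < length es \<Longrightarrow> pend t (v, take (Suc i) es) = t (es ! i)"
  by (simp add: pend_def take_Suc_conv_app_nth)

lemma pmult_assoc: "pmult t (pmult t f g) h = pmult t f (pmult t g h)"
proof (rule ext, clarify)
  fix v and es :: "'b list"
  let ?n = "length es"
  define F where "F j k = f (v, take j es) * g (pend t (v, take j es), take k (drop j es)) *
       h (pend t (v, take (j + k) es), drop (j + k) es)" for j k
  have "pmult t (pmult t f g) h (v, es) =
     (\<Sum>i\<le>?n. \<Sum>j\<le>i. f (v, take j (take i es)) * g (pend t (v, take j (take i es)), drop j (take i es))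
        * h (pend t (v, take i es), drop i es))"
    by (simp add: pmult_apply sum_distrib_right min_absorb1)
  also have "\<dots> = (\<Sum>i\<le>?n. \<Sum>j\<le>i. F j (i - j))"
    by (intro sum.cong refl) (simp add: F_def drop_take min_absorb1)
  also have "\<dots> = (\<Sum>i\<in>{..?n}. \<Sum>j\<in>{j\<in>{..?n}. j \<le> i}. F j (i - j))"
    by (intro sum.cong refl) auto
  also have "\<dots> = (\<Sum>j\<in>{..?n}. \<Sum>i\<in>{i\<in>{..?n}. j \<le> i}. F j (i - j))"
    by (rule sum.swap_restrict) auto
  also have "\<dots> = (\<Sum>j\<le>?n. \<Sum>k\<le>?n - j. F j k)"
  proof (rule sum.cong[OF refl])
    fix j assume "j \<in> {..?n}"
    then have "{i\<in>{..?n}. j \<le> i} = (\<lambda>k. k + j) ` {0..?n - j}"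
      by (auto simp: image_add_atLeastAtMost)
    then show "(\<Sum>i\<in>{i\<in>{..?n}. j \<le> i}. F j (i - j)) = (\<Sum>k\<le>?n - j. F j k)"
      by (simp add: sum.reindex inj_on_def atLeast0AtMost)
  qed
  also have "\<dots> = pmult t f (pmult t g h) (v, es)"
    by (auto simp: pmult_apply sum_distrib_left F_def pend_take_drop mult.assoc add.commute
        intro!: sum.cong)
  finally show "pmult t (pmult t f g) h (v, es) = pmult t f (pmult t g h) (v, es)" .
qed

lemma pmult_pvec: "pmult t (pvec p) (pvec p') =
   (if pend t p = fst p' then pvec (path_conc p p') else 0)"
proof (rule ext, clarify)
  fix u gs
  obtain v es where p: "p = (v, es)" by (cases p)
  let ?n = "length es"
  have "pmult t (pvec p) (pvec p') (u, gs) =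
     (\<Sum>i\<le>length gs. if i = ?n then (if u = v \<and> take ?n gs = es
        then pvec p' (pend t p, drop ?n gs) else 0) else 0)"
    unfolding pmult_apply by (intro sum.cong refl) (auto simp: pvec_def p)
  also have "\<dots> = (if ?n \<le> length gs \<and> u = v \<and> take ?n gs = es then pvec p' (pend t p, drop ?n gs) else 0)"
    by (simp add: sum.delta)
  also have "\<dots> = (if pend t p = fst p' then pvec (path_conc p p') else 0) (u, gs)"
    by (cases p') (auto simp: pvec_def path_conc_def p append_eq_conv_conj; metis append_take_drop_id)
  finally show "pmult t (pvec p) (pvec p') (u, gs) =
      (if pend t p = fst p' then pvec (path_conc p p') else 0) (u, gs)" .
qed
lemma is_path_conc:
  assumes "is_path V E s t p" "is_path V E s t p'" "pend t p = fst p'"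
  shows "is_path V E s t (path_conc p p')" and "pend t (path_conc p p') = pend t p'"
proof -
  obtain v es where p: "p = (v, es)" by (cases p)
  obtain w fs where p': "p' = (w, fs)" by (cases p')
  have A: "v \<in> V" "set es \<subseteq> E" "es \<noteq> [] \<Longrightarrow> s (hd es) = v"
     "\<And>i. Suc i < length es \<Longrightarrow> t (es ! i) = s (es ! Suc i)"
    using assms(1) by (auto simp: is_path_def p)
  have B: "w \<in> V" "set fs \<subseteq> E" "fs \<noteq> [] \<Longrightarrow> s (hd fs) = w"
     "\<And>i. Suc i < length fs \<Longrightarrow> t (fs ! i) = s (fs ! Suc i)"
    using assms(2) by (auto simp: is_path_def p')
  have C: "pend t (v, es) = w" using assms(3) p p' by simp
  show "is_path V E s t (path_conc p p')"
    unfolding is_path_def path_conc_def p p' fst_conv snd_conv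
  proof (intro conjI allI impI)
    show "v \<in> V" "set (es @ fs) \<subseteq> E" using A B by auto
    show "s (hd (es @ fs)) = v" if "es @ fs \<noteq> []"
      using A B C that by (cases "es = []") (auto simp: pend_def)
    fix i assume i: "Suc i < length (es @ fs)"
    consider "Suc i < length es" | "Suc i = length es" | "length es \<le> i" by linarith
    then show "t ((es @ fs) ! i) = s ((es @ fs) ! Suc i)"
    proof cases
      case 1 then show ?thesis using A by (simp add: nth_append)
    next
      case 2
      then have "fs \<noteq> []" using i by auto
      moreover have "es ! i = last es" using 2 by (metis diff_Suc_1 last_conv_nth list.size(3) nat.simps(3))
      moreover have "es \<noteq> []" using 2 by auto
      ultimately show ?thesis using 2 B C by (auto simp: nth_append pend_def hd_conv_nth)
    next
      case 3
      then show ?thesis using B(4)[of "i - length es"] i by (simp add: nth_append Suc_diff_le)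
    qed
  qed
  show "pend t (path_conc p p') = pend t p'"
    using C by (auto simp: pend_def path_conc_def p p')
qed

lemma is_path_take:
  assumes "is_path V E s t (v, es)"
  shows "is_path V E s t (v, take i es)"
  using assms by (auto simp: is_path_def dest: in_set_takeD)

lemma is_path_drop:
  assumes "is_path V E s t (v, es)" "t ` E \<subseteq> V"
  shows "is_path V E s t (pend t (v, take i es), drop i es)"
proof -
  have A: "v \<in> V" "set es \<subseteq> E" "es \<noteq> [] \<Longrightarrow> s (hd es) = v"
     "\<And>i. Suc i < length es \<Longrightarrow> t (es ! i) = s (es ! Suc i)"
    using assms(1) by (auto simp: is_path_def)
  show ?thesis unfolding is_path_def fst_conv snd_conv
  proof (intro conjI allI impI)
    show "pend t (v, take i es) \<in> V"
    proof (cases "take i es = []")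
      case False
      then have "last (take i es) \<in> E" using A(2) by (meson in_set_takeD last_in_set subsetD)
      then show ?thesis using False assms(2) by (auto simp: pend_def)
    qed (simp add: pend_def A)
    show "set (drop i es) \<subseteq> E" using A(2) by (meson in_set_dropD subsetI subsetD)
    show "s (hd (drop i es)) = pend t (v, take i es)" if "drop i es \<noteq> []"
    proof (cases "i = 0")
      case True then show ?thesis using that A by (simp add: pend_def)
    next
      case False
      then have i: "i < length es" "take i es \<noteq> []" using that by auto
      then have "last (take i es) = es ! (i - 1)" "hd (drop i es) = es ! i"
        by (simp_all add: hd_drop_conv_nth last_conv_nth)
      then show ?thesis using A(4)[of "i - 1"] False i by (simp add: pend_def)
    qed
    fix j assume "Suc j < length (drop i es)"
    then show "t (drop i es ! j) = s (drop i es ! Suc j)" using A(4)[of "i + j"] by simp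
  qed
qed

lemma sum_fun_apply: "(sum f S) x = (\<Sum>i\<in>S. f i x)"
  by (induction S rule: infinite_finite_induct) auto

lemma sum_lessThan_add_split: "(\<Sum>i<m + (n::nat). f i) = (\<Sum>i<m. f i) + (\<Sum>i<n. f (m + i))"
  by (induction n) (auto simp: add.assoc)

lemma connected_quiver_constant:
  assumes "finite_connected_quiver V E s t" and "\<And>r. r \<in> E \<Longrightarrow> f (s r) = f (t r)"
    and "u \<in> V" "w \<in> V"
  shows "f w = f u"
proof -
  have "(u, w) \<in> ({(s e, t e) | e. e \<in> E} \<union> {(t e, s e) | e. e \<in> E})\<^sup>*"
    using assms(1,3,4) unfolding finite_connected_quiver_def by blast
  then show ?thesis
    by (induction rule: rtrancl_induct) (use assms(2) in auto)
qed

section \<open>Dimensions of finite-dimensional subspaces\<close>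

context vector_space
begin

lemma independent_disjoint_span_Int:
  assumes B: "independent B" and "B1 \<subseteq> B" "B2 \<subseteq> B" "B1 \<inter> B2 = {}"
    and "x \<in> span B1" "x \<in> span B2"
  shows "x = 0"
proof -
  have "representation B x = representation B1 x" "representation B x = representation B2 x"
    using representation_extend[OF B] assms by blast+
  then have "representation B x b = 0" for b
    using representation_ne_zero assms(4) by (metis disjoint_iff)
  moreover have "x \<in> span B" using span_mono[OF assms(2)] assms(5) by blast
  then have "x = (\<Sum>b | representation B x b \<noteq> 0. representation B x b *s b)"
    using sum_nonzero_representation_eq[OF B] by simp
  ultimately show ?thesis by simp
qed

lemma independent_Un_of_disjoint_subspaces:
  assumes C: "subspace C" and W: "subspace W" and CW: "C \<inter> W \<subseteq> {0}"
    and BC: "BC \<subseteq> C" "independent BC" and BW: "BW \<subseteq> W" "independent BW"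
  shows "independent (BC \<union> BW)"
  unfolding independent_explicit_module
proof (intro allI impI)
  fix T u v assume T: "finite T" "T \<subseteq> BC \<union> BW" and sum0: "(\<Sum>v\<in>T. u v *s v) = 0"
    and "v \<in> T"
  define x1 where "x1 = (\<Sum>v\<in>T \<inter> BC. u v *s v)"
  define x2 where "x2 = (\<Sum>v\<in>T - BC. u v *s v)"
  have "x1 + x2 = 0"
    using sum0 T(1) unfolding x1_def x2_def by (metis sum.Int_Diff)
  moreover have "x1 \<in> C" unfolding x1_def
    by (intro subsetD[OF span_minimal[OF BC(1) C]] span_sum span_scale span_base) blast
  moreover have "x2 \<in> W" unfolding x2_def using T(2)
    by (intro subsetD[OF span_minimal[OF BW(1) W]] span_sum span_scale span_base) blast
  ultimately have "x1 = 0" "x2 = 0"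
    using CW subspace_neg[OF W, of x2] by (auto simp: add_eq_0_iff)
  then show "u v = 0"
    using independentD[OF BC(2), of "T \<inter> BC"] independentD[OF BW(2), of "T - BC"]
      T \<open>v \<in> T\<close> unfolding x1_def x2_def by blast
qed

lemma dim_direct_sum:
  assumes C: "subspace C" and W: "subspace W" and CW: "C \<inter> W \<subseteq> {0}"
    and U: "U = {c + w | c w. c \<in> C \<and> w \<in> W}" and F: "finite F" "U \<subseteq> span F"
  shows "dim U = dim C + dim W"
proof -
  obtain BC where BC: "BC \<subseteq> C" "independent BC" "C \<subseteq> span BC" "card BC = dim C"
    using basis_exists by blast
  obtain BW where BW: "BW \<subseteq> W" "independent BW" "W \<subseteq> span BW" "card BW = dim W"
    using basis_exists by blast
  have CU: "C \<subseteq> U" unfolding U using subspace_0[OF W] by force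
  have WU: "W \<subseteq> U" unfolding U using subspace_0[OF C] by force
  have fin: "finite BC" "finite BW"
    using independent_span_bound[OF F(1)] BC BW CU WU F(2) by (meson order_trans)+
  have disj: "BC \<inter> BW = {}"
    using BC(1,2) BW(1) CW dependent_zero by blast
  have "U \<subseteq> span (BC \<union> BW)"
  proof
    fix u assume "u \<in> U"
    then obtain c w where "u = c + w" "c \<in> C" "w \<in> W" unfolding U by blast
    moreover have "C \<subseteq> span (BC \<union> BW)" "W \<subseteq> span (BC \<union> BW)"
      using BC(3) BW(3) span_mono[of BC "BC \<union> BW"] span_mono[of BW "BC \<union> BW"] by auto
    ultimately show "u \<in> span (BC \<union> BW)" using span_add by blast
  qed
  moreover have "BC \<union> BW \<subseteq> U" using BC(1) BW(1) CU WU by blast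
  ultimately have "dim U = card (BC \<union> BW)"
    using basis_card_eq_dim[OF _ _ independent_Un_of_disjoint_subspaces[OF C W CW BC(1,2) BW(1,2)]]
    by simp
  then show ?thesis using card_Un_disjoint[OF fin disj] BC(4) BW(4) by simp
qed

lemma complement_exists:
  assumes K: "subspace K" and N: "subspace N" and "K \<subseteq> N"
  obtains C where "subspace C" "C \<subseteq> N" "C \<inter> K \<subseteq> {0}" "N = {c + k | c k. c \<in> C \<and> k \<in> K}"
proof -
  obtain BK where BK: "BK \<subseteq> K" "independent BK" "K \<subseteq> span BK"
    using basis_exists[of K] by metis
  obtain BN where BN: "BK \<subseteq> BN" "BN \<subseteq> N" "independent BN" "N \<subseteq> span BN"
    using maximal_independent_subset_extend[of BK N] BK(1,2) assms(3) by blast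
  have spanBK: "span BK \<subseteq> K" using span_minimal[OF BK(1) K] .
  define C where "C = span (BN - BK)"
  have "C \<subseteq> N" unfolding C_def using span_minimal[of "BN - BK" N] BN(2) N by blast
  moreover have "C \<inter> K \<subseteq> {0}"
  proof
    fix x assume "x \<in> C \<inter> K"
    then have "x \<in> span (BN - BK)" "x \<in> span BK" using BK(3) C_def by auto
    then show "x \<in> {0}"
      using independent_disjoint_span_Int[OF BN(3), of "BN - BK" BK] BN(1) by blast
  qed
  moreover have "N = {c + k | c k. c \<in> C \<and> k \<in> K}"
  proof
    show "N \<subseteq> {c + k | c k. c \<in> C \<and> k \<in> K}"
    proof
      fix n assume "n \<in> N"
      then have "n \<in> span ((BN - BK) \<union> BK)"
        using BN(1,4) by (metis Diff_partition sup_commute subsetD)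
      then obtain c k where "n = c + k" "c \<in> span (BN - BK)" "k \<in> span BK"
        unfolding span_Un by blast
      then show "n \<in> {c + k | c k. c \<in> C \<and> k \<in> K}" using spanBK unfolding C_def by blast
    qed
    show "{c + k | c k. c \<in> C \<and> k \<in> K} \<subseteq> N"
      using \<open>C \<subseteq> N\<close> assms(3) subspace_add[OF N] by blast
  qed
  moreover have "subspace C" unfolding C_def by simp
  ultimately show ?thesis using that by blast
qed

lemma dim_sum_Int:
  assumes S: "subspace S" and T: "subspace T" and F: "finite F" "S \<subseteq> span F" "T \<subseteq> span F"
  shows "dim {x + y | x y. x \<in> S \<and> y \<in> T} + dim (S \<inter> T) = dim S + dim T"
proof -
  have K: "subspace (S \<inter> T)" using subspace_inter[OF S T] .
  obtain C where C: "subspace C" "C \<subseteq> S" "C \<inter> (S \<inter> T) \<subseteq> {0}"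
    and SC: "S = {c + k | c k. c \<in> C \<and> k \<in> S \<inter> T}"
    by (rule complement_exists[OF K S Int_lower1])
  have "{x + y | x y. x \<in> S \<and> y \<in> T} = {c + y | c y. c \<in> C \<and> y \<in> T}"
  proof (intro subset_antisym subsetI)
    fix z assume "z \<in> {x + y | x y. x \<in> S \<and> y \<in> T}"
    then obtain x y where xy: "z = x + y" "x \<in> S" "y \<in> T" by blast
    have "x \<in> {c + k | c k. c \<in> C \<and> k \<in> S \<inter> T}" using xy(2) by (simp only: SC[symmetric])
    then obtain c k where ck: "z = c + (k + y)" "c \<in> C" "k \<in> T"
      using xy(1) by (auto simp: add.assoc)
    moreover have "k + y \<in> T" using subspace_add[OF T] ck(3) xy(3) .
    ultimately show "z \<in> {c + y | c y. c \<in> C \<and> y \<in> T}" by blast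
  next
    fix z assume "z \<in> {c + y | c y. c \<in> C \<and> y \<in> T}"
    then show "z \<in> {x + y | x y. x \<in> S \<and> y \<in> T}" using C(2) by blast
  qed
  moreover have "{x + y | x y. x \<in> S \<and> y \<in> T} \<subseteq> span F"
    using F(2,3) by (blast intro: span_add)
  moreover have "C \<inter> T \<subseteq> {0}" using C(2,3) by blast
  ultimately have "dim {x + y | x y. x \<in> S \<and> y \<in> T} = dim C + dim T"
    using dim_direct_sum[OF C(1) T _ _ F(1)] by simp
  moreover have "dim S = dim C + dim (S \<inter> T)"
    using dim_direct_sum[OF C(1) K C(3) SC F(1,2)] .
  ultimately show ?thesis by simp
qed

text \<open>The complement chosen by \<open>SOME\<close> in \<open>quot_dim\<close> exists, so the choice is not vacuous.\<close>
lemma quot_dim_eq: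
  assumes U: "subspace U" and W: "subspace W" and "W \<subseteq> U" and F: "finite F" "U \<subseteq> span F"
  shows "quot_dim scale U W + dim W = dim U"
proof -
  define complement where "complement C \<longleftrightarrow> subspace C \<and> C \<subseteq> U \<and> C \<inter> W = {0} \<and>
      (\<forall>u\<in>U. \<exists>c\<in>C. \<exists>w\<in>W. u = c + w)" for C
  obtain C0 where "subspace C0" "C0 \<subseteq> U" "C0 \<inter> W \<subseteq> {0}" "U = {c + w | c w. c \<in> C0 \<and> w \<in> W}"
    by (rule complement_exists[OF W U assms(3)])
  then have "complement C0"
    using subspace_0[OF W] by (auto simp: complement_def subspace_0)
  then have "complement (SOME C. complement C)" by (rule someI)
  then obtain C where C: "C = (SOME C. complement C)" "subspace C" "C \<subseteq> U" "C \<inter> W \<subseteq> {0}"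
      "\<forall>u\<in>U. \<exists>c\<in>C. \<exists>w\<in>W. u = c + w"
    unfolding complement_def by blast
  have "U = {c + w | c w. c \<in> C \<and> w \<in> W}"
    using C(3,5) assms(3) subspace_add[OF U] by blast
  then have "dim U = dim C + dim W"
    using dim_direct_sum[OF C(2) W C(4) _ F] by simp
  then show ?thesis
    unfolding quot_dim_def complement_def[symmetric] C(1)[symmetric] by simp
qed
end

lemma linear_dim_image_eq:
  assumes f: "Vector_Spaces.linear s1 s2 f" and S: "module.subspace s1 S" and inj: "inj_on f S"
  shows "vector_space.dim s2 (f ` S) = vector_space.dim s1 S"
proof -
  interpret lf: Vector_Spaces.linear s1 s2 f by (rule f)
  obtain B where B: "B \<subseteq> S" "lf.vs1.independent B" "S \<subseteq> lf.vs1.span B" "card B = lf.vs1.dim S"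
    using lf.vs1.basis_exists by blast
  have "inj_on f (lf.vs1.span B)" using inj_on_subset[OF inj lf.vs1.span_minimal[OF B(1) S]] .
  then have "lf.vs2.independent (f ` B)" using lf.independent_injective_image[OF B(2)] by blast
  moreover have "card (f ` B) = card B" using card_image inj_on_subset[OF inj B(1)] by blast
  ultimately show ?thesis
    using lf.vs2.basis_card_eq_dim[OF image_mono[OF B(1)] lf.spans_image[OF B(3)]] B(4) by simp
qed

lemma vector_space_fscale:
  "vector_space sc \<Longrightarrow> vector_space (fscale sc :: 'k::field \<Rightarrow> ('b \<Rightarrow> 'a::ab_group_add) \<Rightarrow> _)"
  unfolding vector_space_def fscale_def by (auto simp: fun_eq_iff)

section \<open>The quotient algebra\<close>

locale quiver_quotient =
  fixes V :: "'v set" and E :: "'e set" and s t :: "'e \<Rightarrow> 'v"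
    and I :: "(('v,'e) qpath \<Rightarrow> 'k::field) set"
    and \<pi> :: "(('v,'e) qpath \<Rightarrow> 'k) \<Rightarrow> 'a::ab_group_add"
    and sc :: "'k \<Rightarrow> 'a \<Rightarrow> 'a" and mul :: "'a \<Rightarrow> 'a \<Rightarrow> 'a"
    and Q :: "'a set"
  assumes quiver: "finite_connected_quiver V E s t"
    and ideal: "is_ideal V E s t I"
    and ideal_sq: "I \<subseteq> arrow_ideal_sq V E s t"
    and presentation: "quotient_presentation V E s t I \<pi> sc mul"
    and basis: "path_basis V E s t \<pi> sc Q"
    and acyclic: "acyclic_wrt V E s t \<pi> Q"
begin

abbreviation "KG \<equiv> path_alg V E s t"
abbreviation "path \<equiv> is_path V E s t"
abbreviation "cls p \<equiv> \<pi> (pvec p)"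
abbreviation "vtx v \<equiv> cls (v, [])"
abbreviation "arr r \<equiv> cls (s r, [r])"
abbreviation "pm \<equiv> pmult t"

lemma finite_V: "finite V" and finite_E: "finite E" and s_in_V: "s ` E \<subseteq> V" and t_in_V: "t ` E \<subseteq> V"
  and V_nonempty: "V \<noteq> {}"
  using quiver by (auto simp: finite_connected_quiver_def)

lemma pend_in_V: "path p \<Longrightarrow> pend t p \<in> V"
  using t_in_V by (cases p) (auto simp: is_path_def pend_def dest!: last_in_set)

lemma fst_in_V: "path p \<Longrightarrow> fst p \<in> V"
  by (auto simp: is_path_def)

lemma KG_iff: "x \<in> KG \<longleftrightarrow> finite {p. x p \<noteq> 0} \<and> (\<forall>p. x p \<noteq> 0 \<longrightarrow> path p)"
  by (simp add: path_alg_def)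

lemma zero_KG[simp]: "0 \<in> KG" by (simp add: KG_iff)

lemma add_KG: "x \<in> KG \<Longrightarrow> y \<in> KG \<Longrightarrow> x + y \<in> KG"
proof -
  assume a: "x \<in> KG" "y \<in> KG"
  have "{p. (x + y) p \<noteq> 0} \<subseteq> {p. x p \<noteq> 0} \<union> {p. y p \<noteq> 0}" by auto
  then show ?thesis using a unfolding KG_iff by (auto intro: finite_subset)
qed

lemma diff_KG: "x \<in> KG \<Longrightarrow> y \<in> KG \<Longrightarrow> x - y \<in> KG"
proof -
  assume a: "x \<in> KG" "y \<in> KG"
  have "{p. (x - y) p \<noteq> 0} \<subseteq> {p. x p \<noteq> 0} \<union> {p. y p \<noteq> 0}" by auto
  then show ?thesis using a unfolding KG_iff by (auto intro: finite_subset)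
qed

lemma kscale_KG: "x \<in> KG \<Longrightarrow> kscale c x \<in> KG"
proof -
  assume a: "x \<in> KG"
  have "{p. kscale c x p \<noteq> 0} \<subseteq> {p. x p \<noteq> 0}" by (auto simp: kscale_def)
  then show ?thesis using a unfolding KG_iff by (auto intro: finite_subset simp: kscale_def)
qed

lemma pvec_KG: "path p \<Longrightarrow> pvec p \<in> KG"
  by (auto simp: KG_iff pvec_def)

lemma pmult_KG: assumes "x \<in> KG" "y \<in> KG" shows "pm x y \<in> KG"
proof -
  let ?S = "(\<lambda>(p, q). path_conc p q) ` ({p. x p \<noteq> 0} \<times> {p. y p \<noteq> 0})"
  have fin: "finite ?S" using assms by (auto simp: KG_iff)
  have *: "(\<exists>p q. x p \<noteq> 0 \<and> y q \<noteq> 0 \<and> pend t p = fst q \<and> r = path_conc p q)" if "pm x y r \<noteq> 0" for r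
  proof -
    obtain v es where r: "r = (v, es)" by (cases r)
    from that obtain i where "i \<le> length es" "x (v, take i es) * y (pend t (v, take i es), drop i es) \<noteq> 0"
      unfolding r pmult_apply by (meson sum.not_neutral_contains_not_neutral atMost_iff)
    then show ?thesis by (intro exI[of _ "(v, take i es)"] exI[of _ "(pend t (v, take i es), drop i es)"])
        (auto simp: r path_conc_def)
  qed
  have "{r. pm x y r \<noteq> 0} \<subseteq> ?S" using * by fastforce
  moreover have "path r" if "pm x y r \<noteq> 0" for r
    using *[OF that] assms is_path_conc(1) by (fastforce simp: KG_iff)
  ultimately show ?thesis using fin by (auto simp: KG_iff intro: finite_subset)
qed

lemma KG_induct[consumes 1, case_names zero step]:
  assumes "x \<in> KG" and "\<Phi> 0"
    and step: "\<And>x c p. x \<in> KG \<Longrightarrow> \<Phi> x \<Longrightarrow> path p \<Longrightarrow> \<Phi> (x + kscale c (pvec p))"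
  shows "\<Phi> x"
proof -
  have "x \<in> KG \<Longrightarrow> card {p. x p \<noteq> 0} = n \<Longrightarrow> \<Phi> x" for n x
  proof (induction n arbitrary: x)
    case 0
    then have "x = 0" by (auto simp: KG_iff)
    then show ?case using assms(2) by (simp add: zero_fun_def)
  next
    case (Suc n)
    then obtain p where p: "x p \<noteq> 0" by (metis (mono_tags, lifting) card.empty empty_Collect_eq nat.distinct(1))
    define x' where "x' = x(p := 0)"
    have fin: "finite {p. x p \<noteq> 0}" using Suc.prems by (simp add: KG_iff)
    have "{q. x' q \<noteq> 0} = {q. x q \<noteq> 0} - {p}" by (auto simp: x'_def)
    then have c: "card {q. x' q \<noteq> 0} = n" using Suc.prems p fin by simp
    have x'P: "x' \<in> KG" using Suc.prems by (auto simp: KG_iff x'_def intro: finite_subset[OF _ fin])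
    have ispp: "path p" using Suc.prems p unfolding KG_iff by blast
    have "x = x' + kscale (x p) (pvec p)" by (auto simp: x'_def kscale_def pvec_def)
    then show ?case using step[OF x'P Suc.IH[OF x'P c] ispp, of "x p"] by simp
  qed
  then show ?thesis using assms(1) by blast
qed

lemma pi_add: "x \<in> KG \<Longrightarrow> y \<in> KG \<Longrightarrow> \<pi> (x + y) = \<pi> x + \<pi> y"
  and pi_pmult: "x \<in> KG \<Longrightarrow> y \<in> KG \<Longrightarrow> \<pi> (pm x y) = mul (\<pi> x) (\<pi> y)"
  and pi_kscale: "x \<in> KG \<Longrightarrow> \<pi> (kscale c x) = sc c (\<pi> x)"
  and pi_surj: "\<exists>x\<in>KG. a = \<pi> x"
  and pi_eq_0_iff: "x \<in> KG \<Longrightarrow> \<pi> x = 0 \<longleftrightarrow> x \<in> I"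
  using presentation unfolding quotient_presentation_def kscale_def by (auto simp: image_iff)

lemma ideal_subset_KG: "I \<subseteq> KG" and zero_in_ideal: "0 \<in> I"
  using ideal by (auto simp: is_ideal_def)

lemma pi_zero[simp]: "\<pi> 0 = 0" using pi_eq_0_iff zero_in_ideal zero_KG by blast

lemma pi_diff: "x \<in> KG \<Longrightarrow> y \<in> KG \<Longrightarrow> \<pi> (x - y) = \<pi> x - \<pi> y"
  by (metis diff_KG diff_add_cancel eq_diff_eq pi_add)

lemma vector_space_sc: "vector_space sc"
proof (unfold vector_space_def, intro conjI allI)
  fix a b :: 'k and x y :: 'a
  obtain x0 where x0: "x0 \<in> KG" "x = \<pi> x0" using pi_surj by blast
  obtain y0 where y0: "y0 \<in> KG" "y = \<pi> y0" using pi_surj by blast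
  show "sc a (x + y) = sc a x + sc a y"
    using x0 y0 by (simp add: pi_add[symmetric] pi_kscale[symmetric] add_KG kscale_KG)
      (simp add: kscale_def distrib_left plus_fun_def)
  show "sc (a + b) x = sc a x + sc b x"
    using x0 by (simp add: pi_add[symmetric] pi_kscale[symmetric] add_KG kscale_KG)
      (simp add: kscale_def distrib_right plus_fun_def)
  show "sc a (sc b x) = sc (a * b) x"
    using x0 by (simp add: pi_kscale[symmetric] kscale_KG) (simp add: kscale_def mult.assoc)
  show "sc 1 x = x"
    using x0 by (simp add: pi_kscale[symmetric] kscale_KG) (simp add: kscale_def)
qed

sublocale A: vector_space sc by (rule vector_space_sc)

lemma mul_add_left: "mul (a + b) c = mul a c + mul b c"
  and mul_add_right: "mul c (a + b) = mul c a + mul c b"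
  and mul_sc_left: "mul (sc k a) b = sc k (mul a b)"
  and mul_sc_right: "mul a (sc k b) = sc k (mul a b)"
  and mul_assoc: "mul (mul a b) c = mul a (mul b c)"
proof -
  obtain a0 where a0: "a0 \<in> KG" "a = \<pi> a0" using pi_surj by blast
  obtain b0 where b0: "b0 \<in> KG" "b = \<pi> b0" using pi_surj by blast
  obtain c0 where c0: "c0 \<in> KG" "c = \<pi> c0" using pi_surj by blast
  show "mul (a + b) c = mul a c + mul b c"
    using a0 b0 c0 by (simp add: pi_add[symmetric] pi_pmult[symmetric] add_KG pmult_KG pmult_add_left)
  show "mul c (a + b) = mul c a + mul c b"
    using a0 b0 c0 by (simp add: pi_add[symmetric] pi_pmult[symmetric] add_KG pmult_KG pmult_add_right)
  show "mul (sc k a) b = sc k (mul a b)"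
    using a0 b0 by (simp add: pi_kscale[symmetric] pi_pmult[symmetric] kscale_KG pmult_KG pmult_kscale_left)
  show "mul a (sc k b) = sc k (mul a b)"
    using a0 b0 by (simp add: pi_kscale[symmetric] pi_pmult[symmetric] kscale_KG pmult_KG pmult_kscale_right)
  show "mul (mul a b) c = mul a (mul b c)"
    using a0 b0 c0 by (simp add: pi_pmult[symmetric] pmult_KG pmult_assoc)
qed

lemma mul_zero_left[simp]: "mul 0 a = 0"
  by (metis add_cancel_right_right mul_add_left)
lemma mul_zero_right[simp]: "mul a 0 = 0"
  by (metis add_cancel_right_right mul_add_right)
lemma mul_diff_left: "mul (a - b) c = mul a c - mul b c"
  by (metis diff_add_cancel eq_diff_eq mul_add_left)
lemma mul_diff_right: "mul c (a - b) = mul c a - mul c b"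
  by (metis diff_add_cancel eq_diff_eq mul_add_right)
lemma mul_minus_left: "mul (- a) c = - mul a c"
  by (metis diff_0 mul_diff_left mul_zero_left)
lemma mul_sum_left: "mul (sum f S) c = (\<Sum>i\<in>S. mul (f i) c)"
  by (induction S rule: infinite_finite_induct) (auto simp: mul_add_left)
lemma mul_sum_right: "mul c (sum f S) = (\<Sum>i\<in>S. mul c (f i))"
  by (induction S rule: infinite_finite_induct) (auto simp: mul_add_right)

lemma cls_mult: "path p \<Longrightarrow> path p' \<Longrightarrow>
   mul (cls p) (cls p') = (if pend t p = fst p' then cls (path_conc p p') else 0)"
  by (simp add: pi_pmult[symmetric] pvec_KG pmult_pvec)

lemma path_conc_vertex_left: "path_conc (fst p, []) p = p" by (cases p) (simp add: path_conc_def)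
lemma path_conc_vertex_right: "path_conc p (w, []) = p" by (cases p) (simp add: path_conc_def)

lemma vtx_mul_cls: "path p \<Longrightarrow> v \<in> V \<Longrightarrow> mul (vtx v) (cls p) = (if v = fst p then cls p else 0)"
  using cls_mult[of "(v,[])" p] by (auto simp: is_path_def path_conc_vertex_left pend_def)

lemma cls_mul_vtx: "path p \<Longrightarrow> v \<in> V \<Longrightarrow> mul (cls p) (vtx v) = (if pend t p = v then cls p else 0)"
  using cls_mult[of p "(v,[])"] by (auto simp: is_path_def path_conc_vertex_right)

lemma path_vertex: "v \<in> V \<Longrightarrow> path (v, [])" by (simp add: is_path_def)

lemma path_arrow: "r \<in> E \<Longrightarrow> path (s r, [r])" using s_in_V by (auto simp: is_path_def)

lemma vtx_mul_vtx: "v \<in> V \<Longrightarrow> w \<in> V \<Longrightarrow> mul (vtx v) (vtx w) = (if v = w then vtx v else 0)"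
  using vtx_mul_cls[of "(w,[])" v] path_vertex by auto

lemma span_cls: "A.span {cls p | p. path p} = UNIV"
proof -
  have span: "\<pi> x \<in> A.span {cls p | p. path p}" if "x \<in> KG" for x
    using that
  proof (induction rule: KG_induct)
    case zero show ?case by (simp only: pi_zero A.span_zero)
  next
    case (step x c p)
    then have eq: "\<pi> (x + kscale c (pvec p)) = \<pi> x + sc c (cls p)"
      by (simp add: pi_add pi_kscale kscale_KG pvec_KG)
    have "sc c (cls p) \<in> A.span {cls p | p. path p}"
    proof (rule A.span_scale, rule A.span_base)
      show "cls p \<in> {cls p | p. path p}" using step(2) by blast
    qed
    then show ?case
      unfolding eq by (rule A.span_add[OF step(3)])
  qed
  show ?thesis
  proof (rule sym[OF UNIV_eq_I])
    fix a
    obtain x where "x \<in> KG" "a = \<pi> x" using pi_surj by blast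
    then show "a \<in> A.span {cls p | p. path p}" using span by simp
  qed
qed

lemma Q_independent: "A.independent Q" and Q_span: "A.span Q = UNIV"
  and Q_cls: "q \<in> Q \<Longrightarrow> \<exists>p. path p \<and> q = cls p"
  and vtx_in_Q: "v \<in> V \<Longrightarrow> vtx v \<in> Q" and arr_in_Q: "r \<in> E \<Longrightarrow> arr r \<in> Q"
  using basis by (auto simp: path_basis_def)

lemma Q_nonzero: "q \<in> Q \<Longrightarrow> q \<noteq> 0"
  using Q_independent A.dependent_zero by blast

lemma vtx_fst_mul_cls: "path p \<Longrightarrow> mul (vtx (fst p)) (cls p) = cls p"
  using vtx_mul_cls fst_in_V by auto

lemma cls_mul_vtx_pend: "path p \<Longrightarrow> mul (cls p) (vtx (pend t p)) = cls p"
  using cls_mul_vtx pend_in_V by auto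

lemma cls_eq_same_ends:
  assumes "path p" "path p'" "cls p = cls p'" "cls p \<noteq> 0"
  shows "fst p = fst p'" "pend t p = pend t p'"
proof -
  show "fst p = fst p'"
  proof (rule ccontr)
    assume "fst p \<noteq> fst p'"
    then have "mul (vtx (fst p)) (cls p') = 0" using vtx_mul_cls[OF assms(2) fst_in_V[OF assms(1)]] by simp
    then show False using vtx_fst_mul_cls[OF assms(1)] assms by simp
  qed
  show "pend t p = pend t p'"
  proof (rule ccontr)
    assume "pend t p \<noteq> pend t p'"
    then have "mul (cls p') (vtx (pend t p)) = 0" using cls_mul_vtx[OF assms(2) pend_in_V[OF assms(1)]] by simp
    then show False using cls_mul_vtx_pend[OF assms(1)] assms by simp
  qed
qed

lemma qstart_qend_cls:
  assumes "q \<in> Q" "path p" "q = cls p"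
  shows "qstart V E s t \<pi> q = fst p" "qend V E s t \<pi> q = pend t p"
proof -
  define p' where "p' = (SOME p. path p \<and> \<pi> (pvec p) = q)"
  have "path p \<and> \<pi> (pvec p) = q" using assms(2,3) by simp
  then have H: "path p' \<and> \<pi> (pvec p') = q" unfolding p'_def by (rule someI)
  have nz: "cls p \<noteq> 0" using Q_nonzero assms(1,3) by blast
  have eq: "cls p = cls p'" using H assms(3) by simp
  have "fst p = fst p'" "pend t p = pend t p'"
    using cls_eq_same_ends[OF assms(2) conjunct1[OF H] eq nz] by auto
  then show "qstart V E s t \<pi> q = fst p" "qend V E s t \<pi> q = pend t p"
    unfolding qstart_def qend_def pstart_def p'_def[symmetric] by simp_all
qed

abbreviation "qs q \<equiv> qstart V E s t \<pi> q"
abbreviation "qe q \<equiv> qend V E s t \<pi> q"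

lemma qstart_in_V: "q \<in> Q \<Longrightarrow> qs q \<in> V" and qend_in_V: "q \<in> Q \<Longrightarrow> qe q \<in> V"
proof -
  assume qQ: "q \<in> Q"
  then obtain p where p: "path p" "q = cls p" using Q_cls by blast
  show "qs q \<in> V" using qstart_qend_cls(1)[OF qQ p] fst_in_V[OF p(1)] by simp
  show "qe q \<in> V" using qstart_qend_cls(2)[OF qQ p] pend_in_V[OF p(1)] by simp
qed

lemma vtx_mul_Q: "q \<in> Q \<Longrightarrow> v \<in> V \<Longrightarrow> mul (vtx v) q = (if qs q = v then q else 0)"
proof -
  assume qQ: "q \<in> Q" and vV: "v \<in> V"
  then obtain p where p: "path p" "q = cls p" using Q_cls by blast
  show ?thesis using vtx_mul_cls[OF p(1) vV] qstart_qend_cls(1)[OF qQ p] p(2) by auto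
qed

lemma Q_mul_vtx: "q \<in> Q \<Longrightarrow> v \<in> V \<Longrightarrow> mul q (vtx v) = (if qe q = v then q else 0)"
proof -
  assume qQ: "q \<in> Q" and vV: "v \<in> V"
  then obtain p where p: "path p" "q = cls p" using Q_cls by blast
  show ?thesis using cls_mul_vtx[OF p(1) vV] qstart_qend_cls(2)[OF qQ p] p(2) by auto
qed

lemma qstart_vtx: "v \<in> V \<Longrightarrow> qs (vtx v) = v" and qend_vtx: "v \<in> V \<Longrightarrow> qe (vtx v) = v"
  using qstart_qend_cls[OF vtx_in_Q path_vertex] by (auto simp: pend_def)

lemma qstart_arr: "r \<in> E \<Longrightarrow> qs (arr r) = s r" and qend_arr: "r \<in> E \<Longrightarrow> qe (arr r) = t r"
  using qstart_qend_cls[OF arr_in_Q path_arrow] by (auto simp: pend_def)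

lemma vtx_inj: "v \<in> V \<Longrightarrow> w \<in> V \<Longrightarrow> vtx v = vtx w \<Longrightarrow> v = w"
  by (metis qstart_vtx)

definition vertex_free :: "(('v,'e) qpath \<Rightarrow> 'k) set" where
  "vertex_free = {x \<in> KG. \<forall>v. x (v, []) = 0}"

lemma vertex_free_ideal: "is_ideal V E s t vertex_free"
  unfolding is_ideal_def vertex_free_def
  using add_KG kscale_KG pmult_KG by (auto simp: pmult_apply kscale_def)

lemma ideal_vanishes_at_vertex:
  assumes "x \<in> I" shows "x (v, []) = 0"
proof -
  have "{pvec (s e, [e]) | e. e \<in> E} \<subseteq> vertex_free"
    using pvec_KG path_arrow by (auto simp: vertex_free_def pvec_def)
  then have "arrow_ideal V E s t \<subseteq> vertex_free"
    using vertex_free_ideal unfolding arrow_ideal_def gen_ideal_def by blast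
  then have "{pm a b | a b. a \<in> arrow_ideal V E s t \<and> b \<in> arrow_ideal V E s t} \<subseteq> vertex_free"
    using vertex_free_ideal vertex_free_def unfolding is_ideal_def by blast
  then have "arrow_ideal_sq V E s t \<subseteq> vertex_free"
    using vertex_free_ideal unfolding arrow_ideal_sq_def gen_ideal_def by blast
  then show ?thesis using ideal_sq assms by (auto simp: vertex_free_def)
qed

lemma vtx_sandwich_Q:
  assumes "q \<in> Q" "v \<in> V"
  shows "mul (vtx v) (mul q (vtx v)) = (if q = vtx v then q else 0)"
proof (cases "qs q = v \<and> qe q = v")
  case True
  then obtain u where "u \<in> V" "q = vtx u"
    using acyclic assms(1) unfolding acyclic_wrt_def by metis
  then show ?thesis using True vtx_mul_Q[OF assms] Q_mul_vtx[OF assms] qstart_vtx by auto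
next
  case False
  then show ?thesis using vtx_mul_Q[OF assms] Q_mul_vtx[OF assms] qstart_vtx qend_vtx assms(2) by auto
qed

lemma vtx_sandwich:
  assumes v: "v \<in> V"
  obtains c where "mul (vtx v) (mul a (vtx v)) = sc c (vtx v)"
proof -
  have "a \<in> A.span Q" using Q_span by simp
  then have "\<exists>c. mul (vtx v) (mul a (vtx v)) = sc c (vtx v)"
  proof (induction rule: A.span_induct_alt)
    case base show ?case by (intro exI[of _ 0]) simp
  next
    case (step c q a)
    then obtain c' where "mul (vtx v) (mul a (vtx v)) = sc c' (vtx v)" by blast
    then show ?case
      using vtx_sandwich_Q[OF step(1) v]
      by (intro exI[of _ "(if q = vtx v then c else 0) + c'"])
        (simp add: mul_add_left mul_add_right mul_sc_left mul_sc_right A.scale_left_distrib)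
  qed
  then show ?thesis using that by blast
qed

text \<open>A cycle at \<open>v\<close> is a multiple of \<open>e\<^sub>v\<close> modulo \<open>I\<close>, and the coefficient is read off at the
  trivial path, where every element of \<open>I \<subseteq> R\<^sup>2\<close> vanishes.\<close>
lemma cls_cycle_eq_0:
  assumes c: "path c" "snd c \<noteq> []" "pend t c = fst c"
  shows "cls c = 0"
proof -
  define v where "v = fst c"
  have v: "v \<in> V" using c fst_in_V v_def by blast
  obtain lam where "mul (vtx v) (mul (cls c) (vtx v)) = sc lam (vtx v)"
    using vtx_sandwich[OF v] .
  then have cls_c: "cls c = sc lam (vtx v)"
    using vtx_fst_mul_cls[OF c(1)] cls_mul_vtx_pend[OF c(1)] c(3) v_def mul_assoc by metis
  define x where "x = pvec c - kscale lam (pvec (v, []))"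
  have "x \<in> KG"
    using c v unfolding x_def by (intro diff_KG kscale_KG pvec_KG path_vertex) auto
  moreover have "\<pi> x = 0"
    using c v cls_c by (simp add: x_def pi_diff pvec_KG kscale_KG path_vertex pi_kscale)
  ultimately have "x (v, []) = 0"
    using pi_eq_0_iff ideal_vanishes_at_vertex by blast
  moreover have "(v, []) \<noteq> c" using c(2) by auto
  ultimately have "lam = 0" by (simp add: x_def kscale_def pvec_def)
  then show ?thesis using cls_c by simp
qed

lemma path_revisits_vertex:
  assumes "path (v, es)" "card V \<le> length es"
  obtains i j where "i < j" "j \<le> length es" "pend t (v, take i es) = pend t (v, take j es)"
proof -
  define vt where "vt i = pend t (v, take i es)" for i
  have "vt ` {..length es} \<subseteq> V"
    using pend_in_V is_path_take[OF assms(1)] by (auto simp: vt_def)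
  then have "card (vt ` {..length es}) \<le> card V" using card_mono[OF finite_V] by blast
  then have "card (vt ` {..length es}) < card {..length es}" using assms(2) by simp
  then have "\<not> inj_on vt {..length es}" using pigeonhole by blast
  then obtain i j where "i < j" "j \<le> length es" "vt i = vt j"
    unfolding inj_on_def by (metis atMost_iff linorder_neqE_nat)
  then show ?thesis using that by (simp add: vt_def)
qed

lemma cls_long_path_eq_0:
  assumes p: "path (v, es)" "card V \<le> length es"
  shows "cls (v, es) = 0"
proof -
  obtain i j where ij: "i < j" "j \<le> length es"
    and eq: "pend t (v, take i es) = pend t (v, take j es)"
    using path_revisits_vertex[OF p] .
  define u where "u = pend t (v, take i es)"
  define c where "c = (u, take (j - i) (drop i es))"
  have c: "path c" "pend t c = u"
    unfolding c_def u_def using is_path_take is_path_drop[OF p(1) t_in_V]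
      pend_take_drop[of i "j - i" es t v] ij eq by (metis prod.collapse le_add_diff_inverse less_imp_le)+
  have "snd c \<noteq> []" using ij by (simp add: c_def)
  then have "cls c = 0" using cls_cycle_eq_0 c by (simp add: c_def)
  have "cls (v, take j es) = mul (cls (v, take i es)) (cls c)"
    using cls_mult[OF is_path_take[OF p(1)] c(1)] ij
    by (simp add: path_conc_def c_def u_def take_add[symmetric])
  also have "\<dots> = 0" using \<open>cls c = 0\<close> by simp
  finally have "cls (v, take j es) = 0" .
  moreover have "cls (v, es) = mul (cls (v, take j es)) (cls (pend t (v, take j es), drop j es))"
    using cls_mult[OF is_path_take[OF p(1)] is_path_drop[OF p(1) t_in_V]] by (simp add: path_conc_def)
  ultimately show ?thesis by simp
qed

lemma finite_Q: "finite Q"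
proof -
  define S where "S = {p. path p \<and> length (snd p) < card V}"
  have "S \<subseteq> V \<times> {es. set es \<subseteq> E \<and> length es \<le> card V}"
    by (auto simp: S_def is_path_def)
  moreover have "finite (V \<times> {es. set es \<subseteq> E \<and> length es \<le> card V})"
    using finite_V finite_E finite_lists_length_le by blast
  ultimately have "finite S" by (rule finite_subset)
  have "{cls p | p. path p} \<subseteq> A.span (cls ` S)"
  proof
    fix a assume "a \<in> {cls p | p. path p}"
    then obtain v es where p: "path (v, es)" "a = cls (v, es)" by auto
    show "a \<in> A.span (cls ` S)"
    proof (cases "length es < card V")
      case True then show ?thesis using p by (intro A.span_base) (auto simp: S_def)
    next
      case False
      then have "a = 0" using p cls_long_path_eq_0 by simp
      then show ?thesis by (simp only: A.span_zero)
    qed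
  qed
  then have "A.span {cls p | p. path p} \<subseteq> A.span (cls ` S)" by (rule A.span_minimal) simp
  then have "Q \<subseteq> A.span (cls ` S)" unfolding span_cls by blast
  then show ?thesis
    using A.independent_span_bound[OF finite_imageI[OF \<open>finite S\<close>] Q_independent] by simp
qed

section \<open>Derivations of the quotient\<close>


sublocale FA: vector_space "fscale sc :: 'k \<Rightarrow> ('a \<Rightarrow> 'a) \<Rightarrow> 'a \<Rightarrow> 'a"
  by (rule vector_space_fscale[OF vector_space_sc])

definition unity :: 'a where
  "unity = (\<Sum>v\<in>V. vtx v)"

definition ad :: "'a \<Rightarrow> 'a \<Rightarrow> 'a" where
  "ad a = (\<lambda>x. mul a x - mul x a)"

abbreviation "Der \<equiv> derivations sc mul"
abbreviation "Inn \<equiv> inner_derivations mul"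

definition NDer :: "('a \<Rightarrow> 'a) set" where
  "NDer = {d \<in> Der. \<forall>v\<in>V. d (vtx v) = 0}"

lemma fscale_apply: "fscale sc c f x = sc c (f x)" by (simp add: fscale_def)

lemma eq_on_span_cls:
  assumes f: "\<And>a b. f (a + b) = f a + f b" "\<And>c a. f (sc c a) = sc c (f a)"
    and g: "\<And>a b. g (a + b) = g a + g b" "\<And>c a. g (sc c a) = sc c (g a)"
    and eq: "\<And>p. path p \<Longrightarrow> f (cls p) = g (cls p)"
  shows "f x = g x"
proof -
  have "A.subspace {x. f x = g x}"
    using f(2)[of 0 0] g(2)[of 0 0] f g unfolding A.subspace_def by auto
  moreover have "x \<in> A.span {cls p | p. path p}" using span_cls by simp
  ultimately show ?thesis
    using eq A.span_minimal[of "{cls p | p. path p}" "{x. f x = g x}"] by blast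
qed

lemma mul_unity_left: "mul unity x = x"
proof (rule eq_on_span_cls[where f="\<lambda>x. mul unity x" and g="\<lambda>x. x"])
  fix p assume p: "path p"
  have "mul unity (cls p) = (\<Sum>v\<in>V. mul (vtx v) (cls p))" by (simp add: unity_def mul_sum_left)
  also have "\<dots> = (\<Sum>v\<in>V. if v = fst p then cls p else 0)"
    by (rule sum.cong[OF refl]) (simp add: vtx_mul_cls[OF p])
  also have "\<dots> = cls p" using fst_in_V[OF p] finite_V by (simp add: sum.delta')
  finally show "mul unity (cls p) = cls p" .
qed (auto simp: mul_add_right mul_sc_right)

lemma mul_unity_right: "mul x unity = x"
proof (rule eq_on_span_cls[where f="\<lambda>x. mul x unity" and g="\<lambda>x. x"])
  fix p assume p: "path p"
  have "mul (cls p) unity = (\<Sum>v\<in>V. mul (cls p) (vtx v))" by (simp add: unity_def mul_sum_right)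
  also have "\<dots> = (\<Sum>v\<in>V. if v = pend t p then cls p else 0)"
    by (rule sum.cong[OF refl]) (auto simp: cls_mul_vtx[OF p])
  also have "\<dots> = cls p" using pend_in_V[OF p] finite_V by (simp add: sum.delta)
  finally show "mul (cls p) unity = cls p" .
qed (auto simp: mul_add_left mul_sc_left)

lemma unity_minus_vtx: "w \<in> V \<Longrightarrow> unity - vtx w = (\<Sum>v\<in>V - {w}. vtx v)"
  unfolding unity_def using finite_V by (simp add: sum.remove)

lemma der_add: "d \<in> Der \<Longrightarrow> d (a + b) = d a + d b"
  and der_sc: "d \<in> Der \<Longrightarrow> d (sc c a) = sc c (d a)"
  and der_mul: "d \<in> Der \<Longrightarrow> d (mul a b) = mul (d a) b + mul a (d b)"
  by (auto simp: derivations_def is_derivation_def)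

lemma der_zero: "d \<in> Der \<Longrightarrow> d 0 = 0"
  using der_add[of d 0 0] by simp

lemma Der_subspace: "FA.subspace Der"
  unfolding FA.subspace_def
proof (intro conjI ballI allI)
  show "0 \<in> Der" by (simp add: derivations_def is_derivation_def)
  fix c and x y :: "'a \<Rightarrow> 'a"
  assume x: "x \<in> Der"
  { assume y: "y \<in> Der"
    show "x + y \<in> Der" using x y
      by (auto simp: derivations_def is_derivation_def A.scale_right_distrib mul_add_left mul_add_right) }
  show "fscale sc c x \<in> Der" using x
    by (auto simp: derivations_def is_derivation_def fscale_def A.scale_right_distrib mul_sc_left mul_sc_right)
qed

lemma ad_apply: "ad a x = mul a x - mul x a" by (simp add: ad_def)

lemma ad_in_Der: "ad a \<in> Der"
  unfolding derivations_def is_derivation_def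
proof (intro CollectI conjI allI)
  fix x y c
  show "ad a (x + y) = ad a x + ad a y" by (simp add: ad_apply mul_add_left mul_add_right)
  show "ad a (sc c x) = sc c (ad a x)"
    by (simp add: ad_apply mul_sc_left mul_sc_right A.scale_right_diff_distrib)
  show "ad a (mul x y) = mul (ad a x) y + mul x (ad a y)"
    by (simp add: ad_apply mul_diff_left mul_diff_right mul_assoc)
qed

lemma ad_linear: "Vector_Spaces.linear sc (fscale sc) ad"
proof -
  have "ad (a + b) = ad a + ad b" "ad (sc c a) = fscale sc c (ad a)" for a b c
    by (auto simp: ad_apply fscale_apply mul_add_left mul_add_right mul_sc_left mul_sc_right
        A.scale_right_diff_distrib)
  then show ?thesis
    unfolding Vector_Spaces.linear_iff using vector_space_sc vector_space_fscale by blast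
qed

lemma ad_unity: "ad unity = 0"
  by (rule ext) (simp add: ad_apply mul_unity_left mul_unity_right)

lemma Inn_eq_range_ad: "Inn = range ad"
  by (auto simp: inner_derivations_def ad_def)

lemma Inn_subspace: "FA.subspace Inn"
proof -
  interpret ad: Vector_Spaces.linear sc "fscale sc" ad by (rule ad_linear)
  show ?thesis unfolding Inn_eq_range_ad using ad.subspace_image[OF A.subspace_UNIV] .
qed

lemma Inn_subset_Der: "Inn \<subseteq> Der"
  unfolding Inn_eq_range_ad using ad_in_Der by blast

lemma NDer_subspace: "FA.subspace NDer"
proof -
  have "NDer = Der \<inter> {d. \<forall>v\<in>V. d (vtx v) = 0}" by (auto simp: NDer_def)
  moreover have "FA.subspace {d :: 'a \<Rightarrow> 'a. \<forall>v\<in>V. d (vtx v) = 0}"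
    unfolding FA.subspace_def by (auto simp: fscale_apply)
  ultimately show ?thesis using FA.subspace_inter Der_subspace by simp
qed

lemma der_vtx_mul_vtx:
  assumes d: "d \<in> Der" and "v \<in> V" "w \<in> V" "v \<noteq> w"
  shows "mul (vtx w) (d (vtx v)) = - mul (d (vtx w)) (vtx v)"
proof -
  have "0 = d (mul (vtx w) (vtx v))" using assms vtx_mul_vtx der_zero[OF d] by simp
  also have "\<dots> = mul (d (vtx w)) (vtx v) + mul (vtx w) (d (vtx v))" using der_mul[OF d] by simp
  finally show ?thesis by (simp add: eq_neg_iff_add_eq_0 add.commute)
qed

lemma der_vtx_sandwich:
  assumes d: "d \<in> Der" and w: "w \<in> V"
  shows "mul (vtx w) (mul (d (vtx w)) (vtx w)) = 0"
proof -
  let ?X = "mul (vtx w) (mul (d (vtx w)) (vtx w))"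
  have e: "mul (vtx w) (vtx w) = vtx w" using vtx_mul_vtx[OF w w] by simp
  then have "d (vtx w) = mul (d (vtx w)) (vtx w) + mul (vtx w) (d (vtx w))"
    using der_mul[OF d, of "vtx w" "vtx w"] by simp
  then have "?X = mul (vtx w) (mul (mul (d (vtx w)) (vtx w) + mul (vtx w) (d (vtx w))) (vtx w))"
    by simp
  also have "\<dots> = mul (vtx w) (mul (d (vtx w)) (mul (vtx w) (vtx w)))
      + mul (mul (vtx w) (vtx w)) (mul (d (vtx w)) (vtx w))"
    by (simp add: mul_add_left mul_add_right mul_assoc)
  also have "\<dots> = ?X + ?X" using e by simp
  finally show ?thesis by simp
qed

lemma ad_der_correction:
  assumes d: "d \<in> Der" and w: "w \<in> V"
  shows "ad (\<Sum>v\<in>V. mul (d (vtx v)) (vtx v)) (vtx w) = d (vtx w)"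
proof -
  define a where "a = (\<Sum>v\<in>V. mul (d (vtx v)) (vtx v))"
  have "mul a (vtx w) = (\<Sum>v\<in>V. mul (d (vtx v)) (mul (vtx v) (vtx w)))"
    by (simp add: a_def mul_sum_left mul_assoc)
  also have "\<dots> = (\<Sum>v\<in>V. if v = w then mul (d (vtx v)) (vtx v) else 0)"
    by (rule sum.cong[OF refl]) (simp add: vtx_mul_vtx w)
  also have "\<dots> = mul (d (vtx w)) (vtx w)" using w finite_V by (simp add: sum.delta')
  finally have m1: "mul a (vtx w) = mul (d (vtx w)) (vtx w)" .
  have "mul (vtx w) a = (\<Sum>v\<in>V. mul (mul (vtx w) (d (vtx v))) (vtx v))"
    by (simp add: a_def mul_sum_right mul_assoc)
  also have "\<dots> = (\<Sum>v\<in>V - {w}. - mul (d (vtx w)) (vtx v))"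
  proof -
    have "mul (mul (vtx w) (d (vtx v))) (vtx v) = (if v = w then 0 else - mul (d (vtx w)) (vtx v))"
      if v: "v \<in> V" for v
    proof (cases "v = w")
      case False
      then have "mul (mul (vtx w) (d (vtx v))) (vtx v) = - mul (d (vtx w)) (mul (vtx v) (vtx v))"
        using der_vtx_mul_vtx[OF d v w] by (simp add: mul_minus_left mul_assoc)
      then show ?thesis using False vtx_mul_vtx[OF v v] by simp
    qed (use der_vtx_sandwich[OF d w] in \<open>simp add: mul_assoc\<close>)
    then show ?thesis
      using finite_V w by (simp add: sum.If_cases Diff_eq Int_commute)
  qed
  also have "\<dots> = - mul (d (vtx w)) (unity - vtx w)"
    by (simp add: unity_minus_vtx[OF w] mul_sum_right sum_negf)
  also have "\<dots> = - (d (vtx w) - mul (d (vtx w)) (vtx w))"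
    by (simp add: mul_diff_right mul_unity_right)
  finally have "mul (vtx w) a = - (d (vtx w) - mul (d (vtx w)) (vtx w))" .
  then show ?thesis using m1 by (simp add: ad_apply a_def[symmetric])
qed

lemma derivation_decomp:
  assumes d: "d \<in> Der"
  obtains n i where "n \<in> NDer" "i \<in> Inn" "d = n + i"
proof -
  define a where "a = (\<Sum>v\<in>V. mul (d (vtx v)) (vtx v))"
  have "d - ad a \<in> Der" using FA.subspace_diff[OF Der_subspace d ad_in_Der] .
  then have "d - ad a \<in> NDer"
    using ad_der_correction[OF d] by (simp add: NDer_def a_def)
  moreover have "ad a \<in> Inn" by (simp add: Inn_eq_range_ad)
  ultimately show ?thesis using that by (metis diff_add_cancel)
qed

lemma Der_eq_NDer_plus_Inn: "Der = {n + i | n i. n \<in> NDer \<and> i \<in> Inn}"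
proof
  show "Der \<subseteq> {n + i | n i. n \<in> NDer \<and> i \<in> Inn}"
  proof
    fix d assume "d \<in> Der"
    then obtain n i where "n \<in> NDer" "i \<in> Inn" "d = n + i" by (rule derivation_decomp)
    then show "d \<in> {n + i | n i. n \<in> NDer \<and> i \<in> Inn}" by blast
  qed
  show "{n + i | n i. n \<in> NDer \<and> i \<in> Inn} \<subseteq> Der"
    using FA.subspace_add[OF Der_subspace] Inn_subset_Der by (auto simp: NDer_def)
qed


lemma vtx_sandwich_in_span: "v \<in> V \<Longrightarrow> mul (vtx v) (mul b (vtx v)) \<in> A.span (vtx ` V)"
  by (rule vtx_sandwich[of v b]) (auto intro: A.span_scale A.span_base)

lemma vertex_span_commutes:
  assumes b: "b \<in> A.span (vtx ` V)" and w: "w \<in> V"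
  shows "mul b (vtx w) = mul (vtx w) b"
  using b
proof (induction rule: A.span_induct)
  case base
  show ?case
    unfolding A.subspace_def by (auto simp: mul_add_left mul_add_right mul_sc_left mul_sc_right)
next
  case (step x)
  then show ?case using vtx_mul_vtx w by auto
qed

lemma NDer_Int_Inn: "NDer \<inter> Inn = ad ` A.span (vtx ` V)"
proof
  show "NDer \<inter> Inn \<subseteq> ad ` A.span (vtx ` V)"
  proof
    fix d assume d: "d \<in> NDer \<inter> Inn"
    then obtain b where db: "d = ad b" using Inn_eq_range_ad by blast
    have comm: "mul b (vtx v) = mul (vtx v) b" if "v \<in> V" for v
      using d db that by (simp add: NDer_def ad_apply)
    have "b = mul unity b" by (simp add: mul_unity_left)
    also have "\<dots> = (\<Sum>v\<in>V. mul (vtx v) b)" by (simp add: unity_def mul_sum_left)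
    also have "\<dots> = (\<Sum>v\<in>V. mul (vtx v) (mul b (vtx v)))"
    proof (rule sum.cong[OF refl])
      fix v assume v: "v \<in> V"
      have "mul (vtx v) b = mul (mul (vtx v) (vtx v)) b" using vtx_mul_vtx[OF v v] by simp
      also have "\<dots> = mul (vtx v) (mul b (vtx v))" by (simp add: mul_assoc comm[OF v])
      finally show "mul (vtx v) b = mul (vtx v) (mul b (vtx v))" .
    qed
    finally have "b \<in> A.span (vtx ` V)"
      using A.span_sum[of V "\<lambda>v. mul (vtx v) (mul b (vtx v))"] vtx_sandwich_in_span by simp
    then show "d \<in> ad ` A.span (vtx ` V)" using db by blast
  qed
  show "ad ` A.span (vtx ` V) \<subseteq> NDer \<inter> Inn"
  proof
    fix d assume "d \<in> ad ` A.span (vtx ` V)"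
    then obtain b where b: "b \<in> A.span (vtx ` V)" "d = ad b" by blast
    have "d (vtx w) = 0" if "w \<in> V" for w
      using vertex_span_commutes[OF b(1) that] b(2) by (simp add: ad_apply)
    then show "d \<in> NDer \<inter> Inn" using b(2) ad_in_Der Inn_eq_range_ad by (auto simp: NDer_def)
  qed
qed

lemma vertex_combination_mul_arr:
  assumes r: "r \<in> E"
  shows "mul (\<Sum>v\<in>V. sc (c v) (vtx v)) (arr r) = sc (c (s r)) (arr r)"
    and "mul (arr r) (\<Sum>v\<in>V. sc (c v) (vtx v)) = sc (c (t r)) (arr r)"
proof -
  have "s r \<in> V" "t r \<in> V" using r s_in_V t_in_V by auto
  then show "mul (\<Sum>v\<in>V. sc (c v) (vtx v)) (arr r) = sc (c (s r)) (arr r)"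
      "mul (arr r) (\<Sum>v\<in>V. sc (c v) (vtx v)) = sc (c (t r)) (arr r)"
    using finite_V arr_in_Q[OF r] qstart_arr[OF r] qend_arr[OF r]
    by (simp_all add: mul_sum_left mul_sum_right mul_sc_left mul_sc_right vtx_mul_Q Q_mul_vtx
        if_distrib[of "sc _"] sum.delta' cong: if_cong)
qed

text \<open>A combination of vertices commuting with an arrow has equal coefficients at its two ends;
  by connectedness all coefficients agree, and the missing vertex \<open>v0\<close> forces them to be \<open>0\<close>.\<close>
lemma inj_on_ad_vertex_span:
  assumes v0: "v0 \<in> V"
  shows "inj_on ad (A.span (vtx ` (V - {v0})))"
proof -
  interpret ad: Vector_Spaces.linear sc "fscale sc" ad by (rule ad_linear)
  have fin: "finite (vtx ` (V - {v0}))" using finite_V by simp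
  have inj: "inj_on vtx (V - {v0})" by (rule inj_onI) (auto intro: vtx_inj)
  show ?thesis
    unfolding ad.inj_on_iff_eq_0[OF A.subspace_span]
  proof (intro ballI impI)
    fix b assume "b \<in> A.span (vtx ` (V - {v0}))" and adb: "ad b = 0"
    then obtain u where "b = (\<Sum>w\<in>vtx ` (V - {v0}). sc (u w) w)"
      using A.span_finite[OF fin] by blast
    define c where "c v = (if v = v0 then 0 else u (vtx v))" for v
    have "b = (\<Sum>v\<in>V - {v0}. sc (c v) (vtx v))"
      using \<open>b = _\<close> by (simp add: sum.reindex[OF inj] c_def)
    also have "\<dots> = (\<Sum>v\<in>V. sc (c v) (vtx v))"
      using finite_V v0 by (simp add: sum.remove[of V v0] c_def)
    finally have bc: "b = (\<Sum>v\<in>V. sc (c v) (vtx v))" .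
    have "c (s r) = c (t r)" if r: "r \<in> E" for r
    proof -
      have "sc (c (s r) - c (t r)) (arr r) = 0"
        using fun_cong[OF adb, of "arr r"] vertex_combination_mul_arr[OF r, of c]
        by (simp add: bc ad_apply A.scale_left_diff_distrib)
      then show ?thesis using Q_nonzero[OF arr_in_Q[OF r]] by simp
    qed
    then have "c w = c v0" if "w \<in> V" for w
      using connected_quiver_constant[OF quiver _ v0 that] by blast
    then show "b = 0" using bc by (simp add: c_def)
  qed
qed

lemma ad_vertex_span_eq:
  assumes v0: "v0 \<in> V"
  shows "ad ` A.span (vtx ` V) = ad ` A.span (vtx ` (V - {v0}))"
proof
  interpret ad: Vector_Spaces.linear sc "fscale sc" ad by (rule ad_linear)
  have evV: "vtx ` V = insert (vtx v0) (vtx ` (V - {v0}))" using v0 by auto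
  show "ad ` A.span (vtx ` (V - {v0})) \<subseteq> ad ` A.span (vtx ` V)"
    by (intro image_mono A.span_mono) auto
  define y where "y = (\<Sum>v\<in>V - {v0}. vtx v)"
  have y: "y \<in> A.span (vtx ` (V - {v0}))" unfolding y_def by (intro A.span_sum A.span_base) blast
  have "vtx v0 = unity - y" using unity_minus_vtx[OF v0] by (auto simp: y_def eq_diff_eq diff_eq_eq add.commute)
  then have "ad (vtx v0) = - ad y" using ad.diff[of unity y] ad_unity by simp
  show "ad ` A.span (vtx ` V) \<subseteq> ad ` A.span (vtx ` (V - {v0}))"
  proof
    fix d assume "d \<in> ad ` A.span (vtx ` V)"
    then obtain b where b: "b \<in> A.span (insert (vtx v0) (vtx ` (V - {v0})))" "d = ad b"
      using evV by auto
    then obtain k where k: "b - sc k (vtx v0) \<in> A.span (vtx ` (V - {v0}))"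
      using A.span_breakdown_eq by blast
    define b1 where "b1 = b - sc k (vtx v0)"
    have "d = ad (b1 + sc k (vtx v0))" by (simp add: b b1_def)
    also have "\<dots> = ad b1 - fscale sc k (ad y)"
      using ad.add ad.scale \<open>ad (vtx v0) = - ad y\<close> FA.scale_minus_right by simp
    also have "\<dots> = ad (b1 - sc k y)" using ad.diff ad.scale by simp
    finally have "d = ad (b1 - sc k y)" .
    moreover have "b1 - sc k y \<in> A.span (vtx ` (V - {v0}))"
      using A.span_diff[OF k A.span_scale[OF y]] by (simp add: b1_def)
    ultimately show "d \<in> ad ` A.span (vtx ` (V - {v0}))" by (rule image_eqI)
  qed
qed

lemma dim_NDer_Int_Inn: "FA.dim (NDer \<inter> Inn) = card V - 1"
proof -
  obtain v0 where v0: "v0 \<in> V" using V_nonempty by blast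
  have "vtx ` (V - {v0}) \<subseteq> Q" using vtx_in_Q by blast
  then have "A.independent (vtx ` (V - {v0}))" by (rule A.independent_mono[OF Q_independent])
  then have "A.dim (A.span (vtx ` (V - {v0}))) = card (vtx ` (V - {v0}))"
    by (rule A.dim_span_eq_card_independent)
  also have "\<dots> = card (V - {v0})"
    by (rule card_image) (auto intro: inj_onI vtx_inj)
  also have "\<dots> = card V - 1" using v0 finite_V by simp
  finally have "A.dim (A.span (vtx ` (V - {v0}))) = card V - 1" .
  moreover have "FA.dim (ad ` A.span (vtx ` (V - {v0}))) = A.dim (A.span (vtx ` (V - {v0})))"
    using linear_dim_image_eq[OF ad_linear A.subspace_span inj_on_ad_vertex_span[OF v0]] .
  ultimately show ?thesis
    using NDer_Int_Inn ad_vertex_span_eq[OF v0] by simp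
qed


section \<open>Differential operators\<close>


definition KG_linear :: "((('v,'e) qpath \<Rightarrow> 'k) \<Rightarrow> 'a) \<Rightarrow> bool" where
  "KG_linear F \<longleftrightarrow> (\<forall>x\<in>KG. \<forall>y\<in>KG. F (x + y) = F x + F y) \<and>
     (\<forall>c. \<forall>x\<in>KG. F (kscale c x) = sc c (F x))"

lemma KG_linear_eqI:
  assumes F: "KG_linear F" and G: "KG_linear G"
    and eq: "\<And>p. path p \<Longrightarrow> F (pvec p) = G (pvec p)" and "x \<in> KG"
  shows "F x = G x"
  using \<open>x \<in> KG\<close>
proof (induction rule: KG_induct)
  case zero
  then show ?case using F G zero_KG unfolding KG_linear_def by (metis add_cancel_right_right add_0)
next
  case (step x c p)
  then show ?case
    using F G eq[OF step(2)] pvec_KG[OF step(2)] kscale_KG unfolding KG_linear_def by metis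
qed

lemma KG_leibnizI:
  assumes D: "KG_linear D"
    and paths: "\<And>p p'. path p \<Longrightarrow> path p' \<Longrightarrow>
      D (pm (pvec p) (pvec p')) = mul (D (pvec p)) (cls p') + mul (cls p) (D (pvec p'))"
    and x: "x \<in> KG" and y: "y \<in> KG"
  shows "D (pm x y) = mul (D x) (\<pi> y) + mul (\<pi> x) (D y)"
proof -
  have add: "D (x + y) = D x + D y" if "x \<in> KG" "y \<in> KG" for x y
    using D that unfolding KG_linear_def by blast
  have scale: "D (kscale c x) = sc c (D x)" if "x \<in> KG" for x c
    using D that unfolding KG_linear_def by blast
  have left: "D (pm (pvec p) y) = mul (D (pvec p)) (\<pi> y) + mul (cls p) (D y)" if p: "path p" for p
  proof (rule KG_linear_eqI[OF _ _ _ y])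
    show "KG_linear (\<lambda>y. D (pm (pvec p) y))"
      unfolding KG_linear_def
      by (auto simp: pmult_add_right pmult_kscale_right add scale pmult_KG pvec_KG[OF p])
    show "KG_linear (\<lambda>y. mul (D (pvec p)) (\<pi> y) + mul (cls p) (D y))"
      unfolding KG_linear_def
      by (auto simp: pi_add pi_kscale add scale mul_add_right mul_sc_right A.scale_right_distrib add_ac)
  qed (use paths p in simp)
  show ?thesis
  proof (rule KG_linear_eqI[OF _ _ _ x])
    show "KG_linear (\<lambda>x. D (pm x y))"
      unfolding KG_linear_def using y
      by (auto simp: pmult_add_left pmult_kscale_left add scale pmult_KG)
    show "KG_linear (\<lambda>x. mul (D x) (\<pi> y) + mul (\<pi> x) (D y))"
      unfolding KG_linear_def
      by (auto simp: pi_add pi_kscale add scale mul_add_left mul_sc_left A.scale_right_distrib add_ac)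
  qed (use left in simp)
qed

abbreviation "diffop \<equiv> is_diffop V E s t \<pi> sc mul"

lemma diffop_add: "diffop D \<Longrightarrow> x \<in> KG \<Longrightarrow> y \<in> KG \<Longrightarrow> D (x + y) = D x + D y"
  and diffop_kscale: "diffop D \<Longrightarrow> x \<in> KG \<Longrightarrow> D (kscale c x) = sc c (D x)"
  and diffop_pmult: "diffop D \<Longrightarrow> x \<in> KG \<Longrightarrow> y \<in> KG \<Longrightarrow> D (pm x y) = mul (D x) (\<pi> y) + mul (\<pi> x) (D y)"
  and diffop_outside: "diffop D \<Longrightarrow> x \<notin> KG \<Longrightarrow> D x = 0"
  by (auto simp: is_diffop_def kscale_def)

lemma diffop_KG_linear: "diffop D \<Longrightarrow> KG_linear D"
  by (simp add: is_diffop_def KG_linear_def kscale_def)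

lemma diffop_iff: "diffop D \<longleftrightarrow> KG_linear D \<and> (\<forall>x\<in>KG. \<forall>y\<in>KG. D (pm x y) = mul (D x) (\<pi> y) + mul (\<pi> x) (D y))
    \<and> (\<forall>x. x \<notin> KG \<longrightarrow> D x = 0)"
  by (auto simp: is_diffop_def KG_linear_def kscale_def)

lemma path_snoc: "path (v, es @ [e]) \<Longrightarrow> path (v, es) \<and> e \<in> E \<and> pend t (v, es) = s e"
proof -
  assume a: "path (v, es @ [e])"
  have "path (v, es)" using is_path_take[OF a, of "length es"] by simp
  moreover have "e \<in> E" using a by (auto simp: is_path_def)
  moreover have "pend t (v, es) = s e"
  proof (cases "es = []")
    case True then show ?thesis using a by (auto simp: is_path_def pend_def)
  next
    case False
    have "t ((es @ [e]) ! (length es - 1)) = s ((es @ [e]) ! Suc (length es - 1))"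
    proof -
      have "Suc (length es - 1) < length (es @ [e])" using False by simp
      then show ?thesis using a unfolding is_path_def snd_conv by blast
    qed
    then show ?thesis using False by (simp add: pend_def nth_append last_conv_nth)
  qed
  ultimately show ?thesis by blast
qed

lemma diffop_eqI:
  assumes D1: "diffop D1" and D2: "diffop D2"
    and vert: "\<And>v. v \<in> V \<Longrightarrow> D1 (pvec (v, [])) = D2 (pvec (v, []))"
    and arr: "\<And>e. e \<in> E \<Longrightarrow> D1 (pvec (s e, [e])) = D2 (pvec (s e, [e]))"
  shows "D1 = D2"
proof
  have paths: "D1 (pvec (v, es)) = D2 (pvec (v, es))" if "path (v, es)" for v es
    using that
  proof (induction es rule: rev_induct)
    case Nil then show ?case using vert fst_in_V by force
  next
    case (snoc e es)
    have h: "path (v, es)" "e \<in> E" "pend t (v, es) = s e" using path_snoc[OF snoc.prems] by auto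
    then have eq: "pvec (v, es @ [e]) = pm (pvec (v, es)) (pvec (s e, [e]))"
      by (simp add: pmult_pvec path_conc_def)
    show ?case
      unfolding eq
      using diffop_pmult[OF D1 pvec_KG[OF h(1)] pvec_KG[OF path_arrow[OF h(2)]]]
        diffop_pmult[OF D2 pvec_KG[OF h(1)] pvec_KG[OF path_arrow[OF h(2)]]]
        snoc.IH[OF h(1)] arr[OF h(2)] by simp
  qed
  fix x
  show "D1 x = D2 x"
  proof (cases "x \<in> KG")
    case True
    then show ?thesis
      using KG_linear_eqI[OF diffop_KG_linear[OF D1] diffop_KG_linear[OF D2]] paths
      by (metis prod.collapse)
  qed (simp add: diffop_outside[OF D1] diffop_outside[OF D2])
qed

sublocale FD: vector_space "fscale sc :: 'k \<Rightarrow> ((('v,'e) qpath \<Rightarrow> 'k) \<Rightarrow> 'a) \<Rightarrow> _"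
  by (rule vector_space_fscale[OF vector_space_sc])

lemma diffop_subspace: "FD.subspace {D. diffop D}"
  unfolding FD.subspace_def
proof (intro conjI ballI allI)
  show "0 \<in> {D. diffop D}" by (simp add: is_diffop_def)
  fix c and D1 D2 :: "(('v,'e) qpath \<Rightarrow> 'k) \<Rightarrow> 'a"
  assume D1: "D1 \<in> {D. diffop D}"
  { assume D2: "D2 \<in> {D. diffop D}"
    show "D1 + D2 \<in> {D. diffop D}" using D1 D2
      by (auto simp: is_diffop_def A.scale_right_distrib mul_add_left mul_add_right) }
  show "fscale sc c D1 \<in> {D. diffop D}" using D1
    by (auto simp: is_diffop_def fscale_def A.scale_right_distrib mul_sc_left mul_sc_right)
qed

text \<open>An explicit formula for \<open>D\<^bsub>r,q\<^esub>\<close>: on a path it sums, over the occurrences of \<open>r\<close>,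
  the path with that occurrence replaced by \<open>q\<close>.\<close>
definition Dterm :: "'e \<Rightarrow> 'a \<Rightarrow> ('v,'e) qpath \<Rightarrow> nat \<Rightarrow> 'a" where
  "Dterm r q p i = (if snd p ! i = r then
      mul (mul (cls (fst p, take i (snd p))) q) (cls (t r, drop (Suc i) (snd p))) else 0)"

definition Dpath :: "'e \<Rightarrow> 'a \<Rightarrow> ('v,'e) qpath \<Rightarrow> 'a" where
  "Dpath r q p = (\<Sum>i<length (snd p). Dterm r q p i)"

definition Dop :: "'e \<Rightarrow> 'a \<Rightarrow> (('v,'e) qpath \<Rightarrow> 'k) \<Rightarrow> 'a" where
  "Dop r q x = (if x \<in> KG then (\<Sum>p\<in>{p. x p \<noteq> 0}. sc (x p) (Dpath r q p)) else 0)"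

lemma Dop_sum:
  assumes "x \<in> KG" "finite S" "{p. x p \<noteq> 0} \<subseteq> S"
  shows "Dop r q x = (\<Sum>p\<in>S. sc (x p) (Dpath r q p))"
  unfolding Dop_def using assms by (auto intro!: sum.mono_neutral_left)

lemma KG_linear_Dop: "KG_linear (Dop r q)"
  unfolding KG_linear_def
proof (intro conjI ballI allI)
  fix x y :: "('v,'e) qpath \<Rightarrow> 'k" assume xy: "x \<in> KG" "y \<in> KG"
  let ?S = "{p. x p \<noteq> 0} \<union> {p. y p \<noteq> 0}"
  have S: "finite ?S" using xy by (simp add: KG_iff)
  have "Dop r q (x + y) = (\<Sum>p\<in>?S. sc ((x + y) p) (Dpath r q p))"
    by (rule Dop_sum) (use xy S add_KG in auto)
  then show "Dop r q (x + y) = Dop r q x + Dop r q y"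
    using Dop_sum[OF xy(1) S] Dop_sum[OF xy(2) S] by (simp add: A.scale_left_distrib sum.distrib)
next
  fix c and x :: "('v,'e) qpath \<Rightarrow> 'k" assume x: "x \<in> KG"
  have S: "finite {p. x p \<noteq> 0}" using x by (simp add: KG_iff)
  have "Dop r q (kscale c x) = (\<Sum>p\<in>{p. x p \<noteq> 0}. sc (kscale c x p) (Dpath r q p))"
    by (rule Dop_sum) (use x S kscale_KG in \<open>auto simp: kscale_def\<close>)
  then show "Dop r q (kscale c x) = sc c (Dop r q x)"
    using Dop_sum[OF x S] by (simp add: kscale_def A.scale_sum_right)
qed

lemma Dop_zero: "Dop r q 0 = 0" by (simp add: Dop_def)

lemma Dop_pvec: assumes "path p" shows "Dop r q (pvec p) = Dpath r q p"
proof -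
  have "Dop r q (pvec p) = (\<Sum>p'\<in>{p}. sc (pvec p p') (Dpath r q p'))"
    by (rule Dop_sum) (use pvec_KG[OF assms] in \<open>auto simp: pvec_def\<close>)
  then show ?thesis by (simp add: pvec_def)
qed

lemma suffix_path:
  assumes p: "path (v, es)" and i: "i < length es"
  shows "path (t (es ! i), drop (Suc i) es)" "pend t (t (es ! i), drop (Suc i) es) = pend t (v, es)"
proof -
  have e: "pend t (v, take (Suc i) es) = t (es ! i)" using pend_take_Suc[OF i] .
  show "path (t (es ! i), drop (Suc i) es)" using is_path_drop[OF p t_in_V, of "Suc i"] e by simp
  have "pend t (pend t (v, take (Suc i) es), take (length es - Suc i) (drop (Suc i) es)) =
        pend t (v, take (Suc i + (length es - Suc i)) es)"
    by (rule pend_take_drop) (use i in simp)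
  then show "pend t (t (es ! i), drop (Suc i) es) = pend t (v, es)" using e i by simp
qed

lemma Dterm_path_conc_left:
  assumes p: "path (v, es)" and p': "path (w, fs)" and w: "w = pend t (v, es)" and i: "i < length es"
  shows "Dterm r q (v, es @ fs) i = mul (Dterm r q (v, es) i) (cls (w, fs))"
proof (cases "es ! i = r")
  case True
  have "cls (t r, drop (Suc i) es @ fs) = mul (cls (t r, drop (Suc i) es)) (cls (w, fs))"
    using cls_mult[OF suffix_path(1)[OF p i] p'] suffix_path(2)[OF p i] w True
    by (simp add: path_conc_def)
  then show ?thesis using True i by (simp add: Dterm_def nth_append mul_assoc)
qed (use i in \<open>simp add: Dterm_def nth_append\<close>)

lemma Dterm_path_conc_right:
  assumes p: "path (v, es)" and p': "path (w, fs)" and w: "w = pend t (v, es)" and j: "j < length fs"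
  shows "Dterm r q (v, es @ fs) (length es + j) = mul (cls (v, es)) (Dterm r q (w, fs) j)"
proof (cases "fs ! j = r")
  case True
  have "cls (v, es @ take j fs) = mul (cls (v, es)) (cls (w, take j fs))"
    using cls_mult[OF p is_path_take[OF p']] w by (simp add: path_conc_def)
  then show ?thesis using True j by (simp add: Dterm_def nth_append mul_assoc)
qed (use j in \<open>simp add: Dterm_def nth_append\<close>)

lemma Dpath_path_conc:
  assumes p: "path (v, es)" and p': "path (w, fs)" and w: "w = pend t (v, es)"
  shows "Dpath r q (v, es @ fs) = mul (Dpath r q (v, es)) (cls (w, fs)) + mul (cls (v, es)) (Dpath r q (w, fs))"
proof -
  have "Dpath r q (v, es @ fs) =
      (\<Sum>i<length es. Dterm r q (v, es @ fs) i) + (\<Sum>j<length fs. Dterm r q (v, es @ fs) (length es + j))"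
    by (simp add: Dpath_def sum_lessThan_add_split)
  also have "\<dots> = (\<Sum>i<length es. mul (Dterm r q (v, es) i) (cls (w, fs)))
      + (\<Sum>j<length fs. mul (cls (v, es)) (Dterm r q (w, fs) j))"
    using Dterm_path_conc_left[OF assms] Dterm_path_conc_right[OF assms] by simp
  finally show ?thesis by (simp add: Dpath_def mul_sum_left mul_sum_right)
qed

lemma Dpath_nonconc:
  assumes p: "path (v, es)" and p': "path (w, fs)" and w: "w \<noteq> pend t (v, es)"
  shows "mul (Dpath r q (v, es)) (cls (w, fs)) = 0" "mul (cls (v, es)) (Dpath r q (w, fs)) = 0"
proof -
  have "mul (Dterm r q (v, es) i) (cls (w, fs)) = 0" if i: "i < length es" for i
    using cls_mult[OF suffix_path(1)[OF p i] p'] suffix_path(2)[OF p i] w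
    by (auto simp: Dterm_def mul_assoc)
  then show "mul (Dpath r q (v, es)) (cls (w, fs)) = 0"
    by (simp add: Dpath_def mul_sum_left)
  have "mul (cls (v, es)) (Dterm r q (w, fs) j) = 0" for j
    using cls_mult[OF p is_path_take[OF p']] w by (auto simp: Dterm_def mul_assoc[symmetric])
  then show "mul (cls (v, es)) (Dpath r q (w, fs)) = 0"
    by (simp add: Dpath_def mul_sum_right)
qed

lemma Dop_leibniz_paths:
  assumes p: "path p" and p': "path p'"
  shows "Dop r q (pm (pvec p) (pvec p')) = mul (Dop r q (pvec p)) (cls p') + mul (cls p) (Dop r q (pvec p'))"
proof -
  obtain v es where pv: "p = (v, es)" by (cases p)
  obtain w fs where pw: "p' = (w, fs)" by (cases p')
  have ps: "path (v, es)" "path (w, fs)" using p p' pv pw by simp_all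
  show ?thesis
  proof (cases "w = pend t (v, es)")
    case True
    have "path (v, es @ fs)"
      using is_path_conc(1)[OF ps] True by (simp add: path_conc_def)
    then show ?thesis
      using Dpath_path_conc[OF ps True] True ps
      by (simp add: pv pw pmult_pvec Dop_pvec path_conc_def)
  next
    case False
    then show ?thesis
      using Dpath_nonconc[OF ps False] ps by (simp add: pv pw pmult_pvec Dop_pvec Dop_zero)
  qed
qed

lemma Dop_diffop: "diffop (Dop r q)"
  unfolding diffop_iff
  using KG_linear_Dop KG_leibnizI[OF KG_linear_Dop Dop_leibniz_paths] by (simp add: Dop_def)

lemma Dop_vertex: "v \<in> V \<Longrightarrow> Dop r q (pvec (v, [])) = 0"
  by (simp add: Dop_pvec path_vertex Dpath_def)

lemma Dop_arrow_other: "e \<in> E \<Longrightarrow> e \<noteq> r \<Longrightarrow> Dop r q (pvec (s e, [e])) = 0"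
  by (simp add: Dop_pvec path_arrow Dpath_def Dterm_def)

lemma Dop_arrow: assumes r: "r \<in> E" and q: "q \<in> Q" "s r = qs q" "t r = qe q"
  shows "Dop r q (pvec (s r, [r])) = q"
proof -
  have "Dop r q (pvec (s r, [r])) = mul (mul (vtx (s r)) q) (vtx (t r))"
    by (simp add: Dop_pvec path_arrow[OF r] Dpath_def Dterm_def)
  also have "\<dots> = q" using vtx_mul_Q[OF q(1)] Q_mul_vtx[OF q(1)] q qstart_in_V qend_in_V by simp
  finally show ?thesis .
qed

abbreviation "drs r q \<equiv> Drs V E s t \<pi> sc mul r q"

lemma Drs_spec:
  assumes r: "r \<in> E" and q: "q \<in> Q" "s r = qs q" "t r = qe q"
  shows "diffop (drs r q) \<and> drs r q (pvec (s r, [r])) = q \<and>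
      (\<forall>e\<in>E. e \<noteq> r \<longrightarrow> drs r q (pvec (s e, [e])) = 0) \<and> (\<forall>v\<in>V. drs r q (pvec (v, [])) = 0)"
  unfolding Drs_def
proof (rule theI[where a="Dop r q"])
  show "diffop (Dop r q) \<and> Dop r q (pvec (s r, [r])) = q \<and>
      (\<forall>e\<in>E. e \<noteq> r \<longrightarrow> Dop r q (pvec (s e, [e])) = 0) \<and> (\<forall>v\<in>V. Dop r q (pvec (v, [])) = 0)"
    using Dop_diffop Dop_arrow[OF r q] Dop_arrow_other Dop_vertex by blast
next
  fix D assume D: "diffop D \<and> D (pvec (s r, [r])) = q \<and>
      (\<forall>e\<in>E. e \<noteq> r \<longrightarrow> D (pvec (s e, [e])) = 0) \<and> (\<forall>v\<in>V. D (pvec (v, [])) = 0)"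
  show "D = Dop r q"
  proof (rule diffop_eqI)
    show "diffop D" "diffop (Dop r q)" using D Dop_diffop by auto
    show "D (pvec (v, [])) = Dop r q (pvec (v, []))" if "v \<in> V" for v using D that Dop_vertex by auto
    show "D (pvec (s e, [e])) = Dop r q (pvec (s e, [e]))" if "e \<in> E" for e
      using D that Dop_arrow[OF r q] Dop_arrow_other by (cases "e = r") auto
  qed
qed

section \<open>Normalized derivations and \<open>F\<^sub>2(I)\<close>\<close>


definition lift :: "('a \<Rightarrow> 'a) \<Rightarrow> (('v,'e) qpath \<Rightarrow> 'k) \<Rightarrow> 'a" where
  "lift d = (\<lambda>x. if x \<in> KG then d (\<pi> x) else 0)"

definition parallel :: "'e \<Rightarrow> 'a set" where
  "parallel r = {q \<in> Q. s r = qs q \<and> t r = qe q}"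

definition Drs_gens :: "((('v,'e) qpath \<Rightarrow> 'k) \<Rightarrow> 'a) set" where
  "Drs_gens = {drs r q | r q. r \<in> E \<and> q \<in> parallel r}"

abbreviation "D2 \<equiv> frakD2 V E s t \<pi> sc mul Q"
abbreviation "F2 \<equiv> frakF2 V E s t I \<pi> sc mul Q"

lemma lift_apply: "x \<in> KG \<Longrightarrow> lift d x = d (\<pi> x)"
  by (simp add: lift_def)

lemma D2_eq_span: "D2 = FD.span Drs_gens"
  by (simp add: frakD2_def Drs_gens_def parallel_def)

lemma lift_linear: "Vector_Spaces.linear (fscale sc) (fscale sc) lift"
proof -
  have "lift (d1 + d2) = lift d1 + lift d2" "lift (fscale sc c d) = fscale sc c (lift d)" for d1 d2 d c
    unfolding lift_def fscale_def by (auto simp: fun_eq_iff)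
  then show ?thesis
    unfolding Vector_Spaces.linear_iff using FA.vector_space_axioms FD.vector_space_axioms by blast
qed

lemma inj_lift: "inj lift"
proof (rule injI)
  fix d1 d2 :: "'a \<Rightarrow> 'a" assume eq: "lift d1 = lift d2"
  show "d1 = d2"
  proof
    fix a
    obtain x where "x \<in> KG" "a = \<pi> x" using pi_surj by blast
    then show "d1 a = d2 a" using fun_cong[OF eq, of x] by (simp add: lift_def)
  qed
qed

lemma lift_diffop: assumes d: "d \<in> Der" shows "diffop (lift d)"
  unfolding is_diffop_def
proof (intro conjI ballI allI impI)
  fix x y :: "('v,'e) qpath \<Rightarrow> 'k" assume x: "x \<in> KG" and y: "y \<in> KG"
  show "lift d (x + y) = lift d x + lift d y"
    using add_KG[OF x y] der_add[OF d] pi_add[OF x y] x y by (simp add: lift_def)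
  show "lift d (pm x y) = mul (lift d x) (\<pi> y) + mul (\<pi> x) (lift d y)"
    using pmult_KG[OF x y] der_mul[OF d] pi_pmult[OF x y] x y by (simp add: lift_def)
next
  fix c and x :: "('v,'e) qpath \<Rightarrow> 'k" assume x: "x \<in> KG"
  show "lift d (\<lambda>p. c * x p) = sc c (lift d x)"
    using x kscale_KG[OF x, of c] pi_kscale[OF x, of c] der_sc[OF d] by (simp add: lift_def kscale_def)
qed (simp add: lift_def)

lemma finite_Drs_gens: "finite Drs_gens"
proof -
  have "Drs_gens \<subseteq> (\<lambda>(r, q). drs r q) ` (E \<times> Q)" by (auto simp: Drs_gens_def parallel_def)
  then show ?thesis using finite_E finite_Q finite_subset by blast
qed

lemma D2_diffop:
  assumes "D \<in> D2"
  shows "diffop D" "\<And>v. v \<in> V \<Longrightarrow> D (pvec (v, [])) = 0"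
proof -
  have "FD.subspace ({D. diffop D} \<inter> {D. \<forall>v\<in>V. D (pvec (v, [])) = 0})"
    by (intro FD.subspace_inter diffop_subspace) (auto simp: FD.subspace_def fscale_def)
  moreover have "Drs_gens \<subseteq> {D. diffop D} \<inter> {D. \<forall>v\<in>V. D (pvec (v, [])) = 0}"
    using Drs_spec by (auto simp: Drs_gens_def parallel_def)
  ultimately have "FD.span Drs_gens \<subseteq> {D. diffop D} \<inter> {D. \<forall>v\<in>V. D (pvec (v, [])) = 0}"
    by (rule FD.span_minimal[rotated])
  then show "diffop D" "\<And>v. v \<in> V \<Longrightarrow> D (pvec (v, [])) = 0"
    using assms D2_eq_span by auto
qed

lemma NDer_arr_in_span_parallel:
  assumes d: "d \<in> NDer" and r: "r \<in> E"
  obtains u where "d (arr r) = (\<Sum>q\<in>parallel r. sc (u q) q)"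
proof -
  have dD: "d \<in> Der" and dv: "\<And>v. v \<in> V \<Longrightarrow> d (vtx v) = 0" using d by (auto simp: NDer_def)
  have sV: "s r \<in> V" and tV: "t r \<in> V" using r s_in_V t_in_V by auto
  obtain u where u: "d (arr r) = (\<Sum>q\<in>Q. sc (u q) q)"
    using Q_span A.span_finite[OF finite_Q] by blast
  have "arr r = mul (vtx (s r)) (mul (arr r) (vtx (t r)))"
    using vtx_fst_mul_cls[OF path_arrow[OF r]] cls_mul_vtx_pend[OF path_arrow[OF r]]
    by (simp add: pend_def)
  then have "d (arr r) = mul (vtx (s r)) (mul (d (arr r)) (vtx (t r)))"
    using der_mul[OF dD] dv sV tV by (metis add.right_neutral add_0 mul_zero_left mul_zero_right)
  also have "\<dots> = (\<Sum>q\<in>Q. sc (u q) (mul (vtx (s r)) (mul q (vtx (t r)))))"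
    by (simp add: u mul_sum_left mul_sum_right mul_sc_left mul_sc_right)
  also have "\<dots> = (\<Sum>q\<in>Q. if q \<in> parallel r then sc (u q) q else 0)"
    by (rule sum.cong[OF refl]) (auto simp: vtx_mul_Q Q_mul_vtx sV tV parallel_def qstart_in_V qend_in_V)
  also have "\<dots> = (\<Sum>q\<in>parallel r. sc (u q) q)"
    using finite_Q by (simp add: sum.If_cases parallel_def Int_def)
  finally show ?thesis by (rule that)
qed

lemma Drs_combination_arr:
  assumes e: "e \<in> E"
  shows "(\<Sum>r\<in>E. \<Sum>q\<in>parallel r. fscale sc (u r q) (drs r q)) (pvec (s e, [e]))
    = (\<Sum>q\<in>parallel e. sc (u e q) q)"
proof -
  have "(\<Sum>q\<in>parallel r. sc (u r q) (drs r q (pvec (s e, [e]))))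
      = (if r = e then (\<Sum>q\<in>parallel r. sc (u r q) q) else 0)" if r: "r \<in> E" for r
    using Drs_spec[OF r] e by (auto simp: parallel_def intro!: sum.cong sum.neutral)
  then show ?thesis
    using e finite_E by (simp add: sum_fun_apply fscale_def sum.delta' cong: sum.cong)
qed

lemma lift_NDer_in_F2:
  assumes d: "d \<in> NDer"
  shows "lift d \<in> F2"
proof -
  have dD: "d \<in> Der" and dv: "\<And>v. v \<in> V \<Longrightarrow> d (vtx v) = 0" using d by (auto simp: NDer_def)
  have "\<exists>u. d (arr r) = (\<Sum>q\<in>parallel r. sc (u q) q)" if "r \<in> E" for r
    using NDer_arr_in_span_parallel[OF d that] by blast
  then obtain u where u: "\<And>r. r \<in> E \<Longrightarrow> d (arr r) = (\<Sum>q\<in>parallel r. sc (u r q) q)"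
    by metis
  define G where "G = (\<Sum>r\<in>E. \<Sum>q\<in>parallel r. fscale sc (u r q) (drs r q))"
  have "G \<in> FD.span Drs_gens"
    unfolding G_def
  proof (intro FD.span_sum FD.span_scale FD.span_base)
    fix r q assume "r \<in> E" "q \<in> parallel r"
    then show "drs r q \<in> Drs_gens" by (auto simp: Drs_gens_def)
  qed
  then have G: "G \<in> D2" using D2_eq_span by simp
  have "lift d = G"
  proof (rule diffop_eqI)
    show "diffop (lift d)" by (rule lift_diffop[OF dD])
    show "diffop G" by (rule D2_diffop(1)[OF G])
    show "lift d (pvec (v, [])) = G (pvec (v, []))" if "v \<in> V" for v
      using that D2_diffop(2)[OF G] dv pvec_KG[OF path_vertex[OF that]] by (simp add: lift_def)
    show "lift d (pvec (s e, [e])) = G (pvec (s e, [e]))" if "e \<in> E" for e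
      unfolding lift_def if_P[OF pvec_KG[OF path_arrow[OF that]]] G_def
      using Drs_combination_arr[OF that] u[OF that] by simp
  qed
  moreover have "lift d x = 0" if x: "x \<in> I" for x
  proof -
    have "x \<in> KG" using x ideal_subset_KG by blast
    then have "\<pi> x = 0" using x pi_eq_0_iff by blast
    then show ?thesis using \<open>x \<in> KG\<close> der_zero[OF dD] by (simp add: lift_def)
  qed
  ultimately show ?thesis using G by (simp add: frakF2_def)
qed

lemma diffop_factors_through_pi:
  assumes D: "diffop D" and DI: "\<And>x. x \<in> I \<Longrightarrow> D x = 0"
  obtains d where "d \<in> Der" "D = lift d"
proof -
  define d where "d a = D (SOME x. x \<in> KG \<and> \<pi> x = a)" for a
  have Dd: "D x = d (\<pi> x)" if x: "x \<in> KG" for x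
  proof -
    define x' where "x' = (SOME x'. x' \<in> KG \<and> \<pi> x' = \<pi> x)"
    have x': "x' \<in> KG" "\<pi> x' = \<pi> x" unfolding x'_def by (rule someI2[of _ x], use x in auto)+
    have "x - x' \<in> KG" using diff_KG[OF x x'(1)] .
    moreover have "\<pi> (x - x') = 0" using pi_diff[OF x x'(1)] x'(2) by simp
    ultimately have "x - x' \<in> I" using pi_eq_0_iff by blast
    then have "D x' + D (x - x') = D x'" using DI by simp
    then show ?thesis using diffop_add[OF D x'(1) diff_KG[OF x x'(1)]] by (simp add: d_def x'_def)
  qed
  have "d \<in> Der"
    unfolding derivations_def is_derivation_def
  proof (intro CollectI conjI allI)
    fix a b c
    obtain x where x: "x \<in> KG" "a = \<pi> x" using pi_surj by blast
    obtain y where y: "y \<in> KG" "b = \<pi> y" using pi_surj by blast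
    show "d (a + b) = d a + d b"
      using Dd[OF add_KG[OF x(1) y(1)]] Dd x y diffop_add[OF D x(1) y(1)] pi_add[OF x(1) y(1)] by simp
    show "d (sc c a) = sc c (d a)"
      using Dd[OF kscale_KG[OF x(1)]] Dd x diffop_kscale[OF D x(1)] pi_kscale[OF x(1)] by simp
    show "d (mul a b) = mul (d a) b + mul a (d b)"
      using Dd[OF pmult_KG[OF x(1) y(1)]] Dd x y diffop_pmult[OF D x(1) y(1)] pi_pmult[OF x(1) y(1)]
      by simp
  qed
  moreover have "D = lift d"
    using Dd diffop_outside[OF D] by (auto simp: lift_def)
  ultimately show ?thesis by (rule that)
qed

lemma lift_NDer_eq_F2: "lift ` NDer = F2"
proof
  show "lift ` NDer \<subseteq> F2" using lift_NDer_in_F2 by blast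
  show "F2 \<subseteq> lift ` NDer"
  proof
    fix D assume "D \<in> F2"
    then have D: "D \<in> D2" "\<And>x. x \<in> I \<Longrightarrow> D x = 0" by (auto simp: frakF2_def)
    obtain d where d: "d \<in> Der" "D = lift d"
      using diffop_factors_through_pi[OF D2_diffop(1)[OF D(1)] D(2)] .
    have "d (vtx v) = 0" if "v \<in> V" for v
      using D2_diffop(2)[OF D(1) that] lift_apply[OF pvec_KG[OF path_vertex[OF that]]] d(2) by simp
    then show "D \<in> lift ` NDer" using d by (auto simp: NDer_def)
  qed
qed

lemma dim_NDer_eq_dim_F2: "FA.dim NDer = FD.dim F2"
  using linear_dim_image_eq[OF lift_linear NDer_subspace inj_on_subset[OF inj_lift subset_UNIV]]
    lift_NDer_eq_F2 by simp

lemma NDer_finite_dim: obtains B where "finite B" "NDer \<subseteq> FA.span B"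
proof -
  interpret lift: Vector_Spaces.linear "fscale sc" "fscale sc" lift by (rule lift_linear)
  obtain B where B: "B \<subseteq> NDer" "FA.independent B" "NDer \<subseteq> FA.span B"
    using FA.basis_exists[of NDer] by metis
  have inj: "inj_on lift (FA.span B)" using inj_lift by (rule inj_on_subset) simp
  have "lift ` B \<subseteq> FD.span Drs_gens" using B(1) lift_NDer_in_F2 D2_eq_span by (auto simp: frakF2_def)
  then have "finite (lift ` B)"
    using FD.independent_span_bound[OF finite_Drs_gens lift.independent_injective_image[OF B(2) inj]]
    by blast
  then have "finite B" using finite_imageD inj_on_subset[OF inj_lift subset_UNIV] by blast
  then show ?thesis using that[of B] B(3) by simp
qed

lemma Der_finite_dim: obtains F where "finite F" "Der \<subseteq> FA.span F"
proof -
  interpret ad: Vector_Spaces.linear sc "fscale sc" ad by (rule ad_linear)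
  obtain B where B: "finite B" "NDer \<subseteq> FA.span B" by (rule NDer_finite_dim)
  have "Inn \<subseteq> FA.span (ad ` Q)" unfolding Inn_eq_range_ad ad.span_image Q_span by simp
  then have Inn: "Inn \<subseteq> FA.span (B \<union> ad ` Q)"
    using FA.span_mono[of "ad ` Q" "B \<union> ad ` Q"] by blast
  have NDer: "NDer \<subseteq> FA.span (B \<union> ad ` Q)"
    using B(2) FA.span_mono[of B "B \<union> ad ` Q"] by blast
  have "Der \<subseteq> FA.span (B \<union> ad ` Q)"
  proof
    fix d assume "d \<in> Der"
    then obtain n i where "n \<in> NDer" "i \<in> Inn" "d = n + i" by (rule derivation_decomp)
    then show "d \<in> FA.span (B \<union> ad ` Q)" using Inn NDer FA.span_add by blast
  qed
  then show ?thesis using that[of "B \<union> ad ` Q"] B(1) finite_Q by simp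
qed

theorem hh1_dim_formula: "int (hh1_dim sc mul) = int (FD.dim F2) + 1 - int (card V)"
proof -
  obtain F where F: "finite F" "Der \<subseteq> FA.span F" by (rule Der_finite_dim)
  have "NDer \<subseteq> FA.span F" "Inn \<subseteq> FA.span F"
    using F(2) Inn_subset_Der by (auto simp: NDer_def)
  then have "FA.dim Der + FA.dim (NDer \<inter> Inn) = FA.dim NDer + FA.dim Inn"
    using FA.dim_sum_Int[OF NDer_subspace Inn_subspace F(1)] Der_eq_NDer_plus_Inn by simp
  moreover have "hh1_dim sc mul + FA.dim Inn = FA.dim Der"
    using FA.quot_dim_eq[OF Der_subspace Inn_subspace Inn_subset_Der F] by (simp add: hh1_dim_def)
  moreover have "card V \<ge> 1" using finite_V V_nonempty by (simp add: Suc_le_eq card_gt_0_iff)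
  ultimately show ?thesis using dim_NDer_Int_Inn dim_NDer_eq_dim_F2 by simp
qed

end

theorem corollary4p4:
  fixes V :: "'v set" and E :: "'e set" and s t :: "'e \<Rightarrow> 'v"
    and I :: "(('v,'e) qpath \<Rightarrow> 'k::field) set"
    and \<pi> :: "(('v,'e) qpath \<Rightarrow> 'k) \<Rightarrow> 'a::ab_group_add"
    and sc :: "'k \<Rightarrow> 'a \<Rightarrow> 'a" and mul :: "'a \<Rightarrow> 'a \<Rightarrow> 'a"
    and Q :: "'a set"
  assumes "finite_connected_quiver V E s t"
    and "is_ideal V E s t I"
    and "I \<subseteq> arrow_ideal_sq V E s t"
    and "quotient_presentation V E s t I \<pi> sc mul"
    and "path_basis V E s t \<pi> sc Q"
    and "acyclic_wrt V E s t \<pi> Q"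
  shows "int (hh1_dim sc mul) =
         int (vector_space.dim (fscale sc) (frakF2 V E s t I \<pi> sc mul Q)) + 1 - int (card V)"
proof -
  interpret quiver_quotient V E s t I \<pi> sc mul Q
    using assms by unfold_locales
  show ?thesis by (rule hh1_dim_formula)
qed

end
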